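(* Let $\lambda = 2\cos(\pi/18)$, $S = \begin{pmatrix} 0 & -1 \\ 1 & 0 \end{pmatrix}$, $T = \begin{pmatrix} 1 & \lambda \\ 0 & 1 \end{pmatrix}$, and $G_{18} = \langle S, T\rangle \subset \mathrm{SL}(2,\mathbb{R})$. For a finite sequence $n_1,\dots,n_k$ of nonzero integers let $M(n_1,\dots,n_k) = S T^{n_k} \cdots S T^{n_1} \in G_{18}$, and let $(n_1,\dots,n_k)^m$ denote the concatenation of $m$ copies of $n_1,\dots,n_k$. Then for every integer $k \ge 0$, each of the following elements of $G_{18}$ is a special hyperbolic element: \begin{align*} & M(2, (-4, -1, 4, 1)^k, -2, -2, 2, (1, -4, -1, 4)^k) \\ & M(4, (2, -2, -2, 2)^k, 1, -4, -1, (2, 2, -2, -2)^k) \\ & M(-4, (-1, 8, 1, -2)^k, -2, 1, 2, (-2, -1, 8, 1)^k) \\ & M(-1, (-4, 2, 1, -2)^k, -2, 1, 8, (1, -1, -1, 16)^k) \\ & M(16, (1, -2, -1, 8)^k, -1, -1, 1, (8, 1, -2, -1)^k) \\ & M(4, (2, -2, -2, 2)^k, 2, -2, -1, 4, 1, -2, -2, (2, 2, -2, -2)^k) \\ & M(4, (1, -2, -4, 2)^k, 1, -2, -2, 4, 2, -2, -1, (2, 4, -2, -1)^k) \\ & M(2, (-4, -1, 4, 1)^k, -4, -1, 2, 2, -2, -1, 4, (1, -4, -1, 4)^k) \\ & M(2, (-2, -1, 8, 1)^k, -2, -1, 4, 2, -4, -1, 2, (1, -8, -1, 2)^k) \\ &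 M(-4, (-1, 8, 1, -2)^k, -1, 8, -1, -1, 1, 8, 1, (-2, -1, 8, 1)^k) \\ & M(2, (-8, -1, 2, 1)^k, -8, -1, 1, 2, -1, -1, 8, (1, -2, -1, 8)^k) \\ & M(2, (-1, -1, 16, 1)^k, -1, -1, 8, 2, -8, -1, 1, (1, -16, -1, 1)^k) \\ & M(16, (1, -2, -1, 8)^k, 1, -2, -2, 1, 2, -2, -1, (8, 1, -2, -1)^k) \end{align*} Moreover, for each of these thirteen families, the fixed points in $\mathbb{P}^1(\mathbb{R})$ of its members (over all $k\ge 0$) form infinitely many distinct $G_{18}$-orbits in $\lambda\mathbb{Q}(\lambda^2)$.
   Context: $G_{18}$ acts on $\mathbb{P}^1(\mathbb{R})$ by Möbius transformations. A matrix in $\mathrm{SL}(2,\mathbb{R})$ is hyperbolic if the absolute value of its trace exceeds $2$. A hyperbolic element of $G_{18}$ is special if its eigenvalues lie in $K_{18} = \mathbb{Q}(\lambda^2)$. *)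

theory Defs
  imports Complex_Main
begin

datatype mat2 = Mat2 (ent11: real) (ent12: real) (ent21: real) (ent22: real)

definition mmul :: "mat2 \<Rightarrow> mat2 \<Rightarrow> mat2" (infixl \<open>\<cdot>\<^sub>m\<close> 70) where
  "mmul A B = Mat2 (ent11 A * ent11 B + ent12 A * ent21 B) (ent11 A * ent12 B + ent12 A * ent22 B)
                   (ent21 A * ent11 B + ent22 A * ent21 B) (ent21 A * ent12 B + ent22 A * ent22 B)"

definition mid :: mat2 where "mid = Mat2 1 0 0 1"

definition mdet :: "mat2 \<Rightarrow> real" where "mdet A = ent11 A * ent22 A - ent12 A * ent21 A"

definition mtrace :: "mat2 \<Rightarrow> real" where "mtrace A = ent11 A + ent22 A"

definition minv :: "mat2 \<Rightarrow> mat2" where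
  "minv A = Mat2 (ent22 A / mdet A) (- ent12 A / mdet A) (- ent21 A / mdet A) (ent11 A / mdet A)"

definition mpow :: "mat2 \<Rightarrow> nat \<Rightarrow> mat2" where
  "mpow A n = ((\<lambda>B. A \<cdot>\<^sub>m B) ^^ n) mid"

definition zpow :: "mat2 \<Rightarrow> int \<Rightarrow> mat2" where
  "zpow A n = (if n \<ge> 0 then mpow A (nat n) else mpow (minv A) (nat (- n)))"

definition lam :: real where "lam = 2 * cos (pi / 18)"

definition Smat :: mat2 where "Smat = Mat2 0 (-1) 1 0"
definition Tmat :: mat2 where "Tmat = Mat2 1 lam 0 1"

inductive_set G18 :: "mat2 set" where
  G_id: "mid \<in> G18"
| G_S: "A \<in> G18 \<Longrightarrow> Smat \<cdot>\<^sub>m A \<in> G18"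
| G_T: "A \<in> G18 \<Longrightarrow> Tmat \<cdot>\<^sub>m A \<in> G18"
| G_Sinv: "A \<in> G18 \<Longrightarrow> minv Smat \<cdot>\<^sub>m A \<in> G18"
| G_Tinv: "A \<in> G18 \<Longrightarrow> minv Tmat \<cdot>\<^sub>m A \<in> G18"

definition Mseq :: "int list \<Rightarrow> mat2" where
  "Mseq ns = foldl (\<lambda>A n. Smat \<cdot>\<^sub>m zpow Tmat n \<cdot>\<^sub>m A) mid ns"

definition is_subfield :: "real set \<Rightarrow> bool" where
  "is_subfield F \<longleftrightarrow> 0 \<in> F \<and> 1 \<in> F \<and> (\<forall>x\<in>F. \<forall>y\<in>F. x + y \<in> F \<and> x * y \<in> F)
      \<and> (\<forall>x\<in>F. - x \<in> F \<and> inverse x \<in> F)"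

definition K18 :: "real set" where
  "K18 = \<Inter>{F. is_subfield F \<and> lam\<^sup>2 \<in> F}"

definition hyperbolic :: "mat2 \<Rightarrow> bool" where
  "hyperbolic A \<longleftrightarrow> \<bar>mtrace A\<bar> > 2"

definition is_eigenvalue :: "mat2 \<Rightarrow> real \<Rightarrow> bool" where
  "is_eigenvalue A \<mu> \<longleftrightarrow> (\<exists>x y. (x, y) \<noteq> (0, 0) \<and>
      ent11 A * x + ent12 A * y = \<mu> * x \<and> ent21 A * x + ent22 A * y = \<mu> * y)"

text \<open>Special hyperbolic element of G_18: hyperbolic, and all its eigenvalues lie in K_18
  (eigenvalues of a hyperbolic element of SL(2,R) are real).\<close>
definition special_hyperbolic :: "mat2 \<Rightarrow> bool" where
  "special_hyperbolic A \<longleftrightarrow> A \<in> G18 \<and> hyperbolic A \<and> (\<forall>\<mu>. is_eigenvalue A \<mu> \<longrightarrow> \<mu> \<in> K18)"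

text \<open>P^1(R) = real option, None = infinity; Moebius action.\<close>
definition mobius :: "mat2 \<Rightarrow> real option \<Rightarrow> real option" where
  "mobius A p = (case p of
      None \<Rightarrow> (if ent21 A = 0 then None else Some (ent11 A / ent21 A))
    | Some x \<Rightarrow> (if ent21 A * x + ent22 A = 0 then None
                 else Some ((ent11 A * x + ent12 A) / (ent21 A * x + ent22 A))))"

definition orbit18 :: "real option \<Rightarrow> real option set" where
  "orbit18 p = {mobius g p | g. g \<in> G18}"

definition lamK :: "real set" where "lamK = {lam * x | x. x \<in> K18}"

definition rep :: "nat \<Rightarrow> int list \<Rightarrow> int list" where
  "rep m xs = concat (replicate m xs)"

definition families18 :: "(nat \<Rightarrow> int list) list" where
  "families18 = [
    (\<lambda>k. [2] @ rep k [-4,-1,4,1] @ [-2,-2,2] @ rep k [1,-4,-1,4]),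
    (\<lambda>k. [4] @ rep k [2,-2,-2,2] @ [1,-4,-1] @ rep k [2,2,-2,-2]),
    (\<lambda>k. [-4] @ rep k [-1,8,1,-2] @ [-2,1,2] @ rep k [-2,-1,8,1]),
    (\<lambda>k. [-1] @ rep k [-4,2,1,-2] @ [-2,1,8] @ rep k [1,-1,-1,16]),
    (\<lambda>k. [16] @ rep k [1,-2,-1,8] @ [-1,-1,1] @ rep k [8,1,-2,-1]),
    (\<lambda>k. [4] @ rep k [2,-2,-2,2] @ [2,-2,-1,4,1,-2,-2] @ rep k [2,2,-2,-2]),
    (\<lambda>k. [4] @ rep k [1,-2,-4,2] @ [1,-2,-2,4,2,-2,-1] @ rep k [2,4,-2,-1]),
    (\<lambda>k. [2] @ rep k [-4,-1,4,1] @ [-4,-1,2,2,-2,-1,4] @ rep k [1,-4,-1,4]),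
    (\<lambda>k. [2] @ rep k [-2,-1,8,1] @ [-2,-1,4,2,-4,-1,2] @ rep k [1,-8,-1,2]),
    (\<lambda>k. [-4] @ rep k [-1,8,1,-2] @ [-1,8,-1,-1,1,8,1] @ rep k [-2,-1,8,1]),
    (\<lambda>k. [2] @ rep k [-8,-1,2,1] @ [-8,-1,1,2,-1,-1,8] @ rep k [1,-2,-1,8]),
    (\<lambda>k. [2] @ rep k [-1,-1,16,1] @ [-1,-1,8,2,-8,-1,1] @ rep k [1,-16,-1,1]),
    (\<lambda>k. [16] @ rep k [1,-2,-1,8] @ [1,-2,-2,1,2,-2,-1] @ rep k [8,1,-2,-1])
  ]"

end

theory Submission
  imports Defs
begin

text \<open>Put \<open>U = S T\<close>, an element of order 18 in \<open>PSL(2, \<real>)\<close>.  The half line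
  \<open>(0, \<infinity>)\<close> and its images \<open>U\<^sup>j(0, \<infinity>)\<close>, \<open>1 \<le> j \<le> 17\<close>, play ping-pong with \<open>S\<close>, so
  every point whose orbit avoids the boundaries gets a digit code in \<open>{1, \<dots>, 17}\<^sup>\<nat>\<close>, and
  points in one \<open>G\<^sub>1\<^sub>8\<close>-orbit have codes with a common tail.  Each family member \<open>M\<^sub>k\<close> is
  conjugate in \<open>G\<^sub>1\<^sub>8\<close>, up to sign, to a product \<open>Y\<^sup>k C X\<^sup>k A\<close> of the nonnegative matrices
  \<open>-S U\<^sup>j\<close>, whose positive fixed point has the periodic code \<open>(Y\<^sup>k C X\<^sup>k A)\<^sup>\<omega>\<close>.
  Since the frequency of the digit 1 in this period is an injective function of \<open>k\<close>, the
  fixed points lie in infinitely many orbits.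

  The trace of \<open>M\<^sub>k\<close> is the Lucas number \<open>V\<^sub>2\<^sub>k\<^sub>+\<^sub>m(\<tau>)\<close> with \<open>\<tau> = 2 + 16\<lambda>\<^sup>4\<close>, and
  \<open>V\<^sub>n(\<tau>)\<^sup>2 - 4 = (\<tau>\<^sup>2 - 4) U\<^sub>n(\<tau>)\<^sup>2\<close> where \<open>\<tau>\<^sup>2 - 4\<close> is a square in \<open>K\<^sub>1\<^sub>8\<close>; hence the
  eigenvalues lie in \<open>K\<^sub>1\<^sub>8\<close>.  Words of even length have diagonal entries in \<open>K\<^sub>1\<^sub>8\<close> and
  off-diagonal entries in \<open>\<lambda>K\<^sub>1\<^sub>8\<close>, which puts the fixed points in \<open>\<lambda>K\<^sub>1\<^sub>8\<close>.  The finitely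
  many identities behind each family are verified by exact arithmetic in \<open>\<int>[\<lambda>]\<close>.\<close>

section \<open>Matrices and the Moebius action\<close>

lemma mat2_eqI:
  "ent11 A = ent11 B \<Longrightarrow> ent12 A = ent12 B \<Longrightarrow> ent21 A = ent21 B \<Longrightarrow> ent22 A = ent22 B \<Longrightarrow> A = B"
  by (cases A; cases B) auto

lemma mmul_simps [simp]:
  "ent11 (A \<cdot>\<^sub>m B) = ent11 A * ent11 B + ent12 A * ent21 B"
  "ent12 (A \<cdot>\<^sub>m B) = ent11 A * ent12 B + ent12 A * ent22 B"
  "ent21 (A \<cdot>\<^sub>m B) = ent21 A * ent11 B + ent22 A * ent21 B"
  "ent22 (A \<cdot>\<^sub>m B) = ent21 A * ent12 B + ent22 A * ent22 B"
  by (simp_all add: mmul_def)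

lemma mid_simps [simp]: "ent11 mid = 1" "ent12 mid = 0" "ent21 mid = 0" "ent22 mid = 1"
  by (simp_all add: mid_def)

lemma mmul_assoc: "(A \<cdot>\<^sub>m B) \<cdot>\<^sub>m C = A \<cdot>\<^sub>m (B \<cdot>\<^sub>m C)"
  by (rule mat2_eqI) (simp_all add: algebra_simps)

lemma mmul_mid [simp]: "mid \<cdot>\<^sub>m A = A" "A \<cdot>\<^sub>m mid = A"
  by (rule mat2_eqI; simp)+

lemma mdet_mmul: "mdet (A \<cdot>\<^sub>m B) = mdet A * mdet B"
  by (simp add: mdet_def algebra_simps)

lemma minv_left: "mdet A \<noteq> 0 \<Longrightarrow> minv A \<cdot>\<^sub>m A = mid"
  by (cases A) (simp add: minv_def mdet_def mmul_def mid_def divide_simps)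

lemma minv_right: "mdet A \<noteq> 0 \<Longrightarrow> A \<cdot>\<^sub>m minv A = mid"
  by (cases A) (simp add: minv_def mdet_def mmul_def mid_def divide_simps)

lemma mdet_minv: "mdet A = 1 \<Longrightarrow> mdet (minv A) = 1"
  by (simp add: mdet_def minv_def algebra_simps)

lemma minv_minv: "mdet A = 1 \<Longrightarrow> minv (minv A) = A"
  by (rule mat2_eqI) (simp_all add: minv_def mdet_def algebra_simps)

lemma minv_mmul: "mdet A = 1 \<Longrightarrow> mdet B = 1 \<Longrightarrow> minv (A \<cdot>\<^sub>m B) = minv B \<cdot>\<^sub>m minv A"
  by (rule mat2_eqI) (simp_all add: minv_def mdet_mmul algebra_simps)

definition mneg :: "mat2 \<Rightarrow> mat2" where
  "mneg A = Mat2 (- ent11 A) (- ent12 A) (- ent21 A) (- ent22 A)"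

lemma mneg_simps [simp]:
  "ent11 (mneg A) = - ent11 A" "ent12 (mneg A) = - ent12 A"
  "ent21 (mneg A) = - ent21 A" "ent22 (mneg A) = - ent22 A"
  by (simp_all add: mneg_def)

lemma mmul_mneg [simp]: "mneg A \<cdot>\<^sub>m B = mneg (A \<cdot>\<^sub>m B)" "A \<cdot>\<^sub>m mneg B = mneg (A \<cdot>\<^sub>m B)"
  by (rule mat2_eqI; simp)+

lemma mdet_mid [simp]: "mdet mid = 1"
  by (simp add: mdet_def)

lemma mdet_mneg [simp]: "mdet (mneg A) = mdet A"
  by (simp add: mdet_def)

lemma mneg_mneg [simp]: "mneg (mneg A) = A"
  by (rule mat2_eqI) simp_all

text \<open>Homogeneous coordinates on \<open>P\<^sup>1(\<real>)\<close>; the value at \<open>(0, 0)\<close> is junk.\<close>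

definition hpoint :: "real \<Rightarrow> real \<Rightarrow> real option" where
  "hpoint x y = (if y = 0 then None else Some (x / y))"

lemma hpoint_exists: "\<exists>x y. (x, y) \<noteq> (0, 0) \<and> p = hpoint x y"
proof (cases p)
  case None
  then show ?thesis by (intro exI[of _ 1] exI[of _ 0]) (simp add: hpoint_def)
next
  case (Some x)
  then show ?thesis by (intro exI[of _ x] exI[of _ 1]) (simp add: hpoint_def)
qed

lemma mobius_hpoint:
  assumes "(x, y) \<noteq> (0, 0)"
  shows "mobius A (hpoint x y)
    = hpoint (ent11 A * x + ent12 A * y) (ent21 A * x + ent22 A * y)"
proof (cases "y = 0")
  case True
  with assms show ?thesis by (simp add: hpoint_def mobius_def)
next
  case False
  let ?u = "ent11 A * (x / y) + ent12 A" and ?v = "ent21 A * (x / y) + ent22 A"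
  have "ent11 A * x + ent12 A * y = ?u * y" "ent21 A * x + ent22 A * y = ?v * y"
    using False by (simp_all add: field_simps)
  moreover have "mobius A (hpoint x y) = (if ?v = 0 then None else Some (?u / ?v))"
    using False by (simp add: hpoint_def mobius_def)
  ultimately show ?thesis
    using False by (simp add: hpoint_def)
qed

lemma mobius_mmul:
  assumes "mdet B \<noteq> 0"
  shows "mobius (A \<cdot>\<^sub>m B) p = mobius A (mobius B p)"
proof -
  obtain x y where xy: "(x, y) \<noteq> (0, 0)" "p = hpoint x y"
    using hpoint_exists by blast
  let ?x' = "ent11 B * x + ent12 B * y" and ?y' = "ent21 B * x + ent22 B * y"
  have "mdet B * x = ent22 B * ?x' - ent12 B * ?y'" "mdet B * y = ent11 B * ?y' - ent21 B * ?x'"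
    by (simp_all add: mdet_def algebra_simps)
  with assms xy(1) have "(?x', ?y') \<noteq> (0, 0)"
    by auto
  then have "mobius A (mobius B p)
      = hpoint (ent11 A * ?x' + ent12 A * ?y') (ent21 A * ?x' + ent22 A * ?y')"
    using xy by (simp add: mobius_hpoint)
  also have "\<dots> = mobius (A \<cdot>\<^sub>m B) p"
    using xy by (simp add: mobius_hpoint algebra_simps)
  finally show ?thesis ..
qed

lemma mobius_mid [simp]: "mobius mid p = p"
  by (cases p) (simp_all add: mobius_def)

lemma hpoint_uminus: "hpoint (- x) (- y) = hpoint x y"
  by (simp add: hpoint_def)

lemma mobius_mneg [simp]: "mobius (mneg A) p = mobius A p"
proof -
  obtain x y where xy: "(x, y) \<noteq> (0, 0)" "p = hpoint x y"
    using hpoint_exists by blast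
  have "mobius (mneg A) p
      = hpoint (- (ent11 A * x + ent12 A * y)) (- (ent21 A * x + ent22 A * y))"
    using xy by (simp add: mobius_hpoint)
  also have "\<dots> = hpoint (ent11 A * x + ent12 A * y) (ent21 A * x + ent22 A * y)"
    by (rule hpoint_uminus)
  also have "\<dots> = mobius A p"
    using xy by (simp add: mobius_hpoint)
  finally show ?thesis .
qed

lemma mobius_minv_cancel:
  assumes "mdet A = 1"
  shows "mobius (minv A) (mobius A p) = p" "mobius A (mobius (minv A) p) = p"
  using assms mdet_minv[OF assms]
  by (simp_all add: mobius_mmul[symmetric] minv_left minv_right)

section \<open>The group \<open>G\<^sub>1\<^sub>8\<close>\<close>

lemma mpow_0 [simp]: "mpow A 0 = mid"
  by (simp add: mpow_def)

lemma mpow_Suc: "mpow A (Suc n) = A \<cdot>\<^sub>m mpow A n"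
  by (simp add: mpow_def)

lemma mpow_1 [simp]: "mpow A 1 = A"
  by (simp add: mpow_def)

lemma mpow_add: "mpow A (m + n) = mpow A m \<cdot>\<^sub>m mpow A n"
  by (induction m) (simp_all add: mpow_Suc mmul_assoc)

lemma mpow_Suc_right: "mpow A (Suc n) = mpow A n \<cdot>\<^sub>m A"
  by (metis mpow_add mpow_1 Suc_eq_plus1)

lemma mdet_mpow: "mdet A = 1 \<Longrightarrow> mdet (mpow A n) = 1"
  by (induction n) (simp_all add: mpow_Suc mdet_mmul)

lemma mdet_Smat: "mdet Smat = 1"
  by (simp add: mdet_def Smat_def)

lemma mdet_Tmat: "mdet Tmat = 1"
  by (simp add: mdet_def Tmat_def)

lemma Smat_Smat: "Smat \<cdot>\<^sub>m Smat = mneg mid"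
  by (rule mat2_eqI) (simp_all add: Smat_def)

lemma minv_Smat: "minv Smat = mneg Smat"
  by (simp add: minv_def Smat_def mdet_def mneg_def)

lemma minv_Tmat: "minv Tmat = Mat2 1 (- lam) 0 1"
  by (simp add: minv_def Tmat_def mdet_def)

lemma mpow_Tmat: "mpow Tmat n = Mat2 1 (real n * lam) 0 1"
  by (induction n) (simp_all add: mpow_Suc Tmat_def mmul_def mid_def algebra_simps)

lemma mpow_minv_Tmat: "mpow (minv Tmat) n = Mat2 1 (- real n * lam) 0 1"
  by (induction n) (simp_all add: mpow_Suc minv_Tmat mmul_def mid_def algebra_simps)

lemma zpow_Tmat: "zpow Tmat n = Mat2 1 (of_int n * lam) 0 1"
  by (simp add: zpow_def mpow_Tmat mpow_minv_Tmat)

lemma G18_mdet: "A \<in> G18 \<Longrightarrow> mdet A = 1"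
  by (induction rule: G18.induct) (simp_all add: mdet_mmul mdet_Smat mdet_Tmat mdet_minv)

lemma G18_mmul: "A \<in> G18 \<Longrightarrow> B \<in> G18 \<Longrightarrow> A \<cdot>\<^sub>m B \<in> G18"
  by (induction rule: G18.induct) (simp_all add: mmul_assoc G18.intros)

lemma G18_generators: "Smat \<in> G18" "Tmat \<in> G18" "minv Smat \<in> G18" "minv Tmat \<in> G18"
  using G18.intros(2-5)[OF G18.G_id] by simp_all

lemma G18_minv: "A \<in> G18 \<Longrightarrow> minv A \<in> G18"
proof (induction rule: G18.induct)
  case G_id
  then show ?case
    by (simp add: minv_def mid_def mdet_def G18.G_id flip: mid_def)
next
  case (G_S A)
  then show ?case
    using G18_mmul G18_generators by (simp add: minv_mmul G18_mdet mdet_Smat)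
next
  case (G_T A)
  then show ?case
    using G18_mmul G18_generators by (simp add: minv_mmul G18_mdet mdet_Tmat)
next
  case (G_Sinv A)
  then show ?case
    using G18_mmul G18_generators
    by (simp add: minv_mmul G18_mdet mdet_minv mdet_Smat minv_minv)
next
  case (G_Tinv A)
  then show ?case
    using G18_mmul G18_generators
    by (simp add: minv_mmul G18_mdet mdet_minv mdet_Tmat minv_minv)
qed

lemma G18_mpow: "A \<in> G18 \<Longrightarrow> mpow A n \<in> G18"
  by (induction n) (simp_all add: mpow_Suc G18.G_id G18_mmul)

lemma G18_zpow_Tmat: "zpow Tmat n \<in> G18"
  by (simp add: zpow_def G18_mpow G18_generators)

lemma Mseq_Nil [simp]: "Mseq [] = mid"
  by (simp add: Mseq_def)

lemma Mseq_foldl: "foldl (\<lambda>A n. Smat \<cdot>\<^sub>m zpow Tmat n \<cdot>\<^sub>m A) B ns = Mseq ns \<cdot>\<^sub>m B"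
proof (induction ns arbitrary: B)
  case (Cons n ns)
  have Cons_mid: "Mseq (n # ns) = Mseq ns \<cdot>\<^sub>m (Smat \<cdot>\<^sub>m zpow Tmat n \<cdot>\<^sub>m mid)"
    unfolding Mseq_def[of "n # ns"] foldl_Cons by (rule Cons.IH)
  have "foldl (\<lambda>A n. Smat \<cdot>\<^sub>m zpow Tmat n \<cdot>\<^sub>m A) B (n # ns)
      = Mseq ns \<cdot>\<^sub>m (Smat \<cdot>\<^sub>m zpow Tmat n \<cdot>\<^sub>m B)"
    unfolding foldl_Cons by (rule Cons.IH)
  also have "\<dots> = Mseq (n # ns) \<cdot>\<^sub>m B"
    unfolding Cons_mid by (simp add: mmul_assoc)
  finally show ?case .
qed simp

lemma Mseq_Cons: "Mseq (n # ns) = Mseq ns \<cdot>\<^sub>m Smat \<cdot>\<^sub>m zpow Tmat n"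
  using Mseq_foldl[of "Smat \<cdot>\<^sub>m zpow Tmat n \<cdot>\<^sub>m mid" ns] by (simp add: Mseq_def mmul_assoc)

lemma Mseq_append: "Mseq (xs @ ys) = Mseq ys \<cdot>\<^sub>m Mseq xs"
proof -
  have "Mseq (xs @ ys) = foldl (\<lambda>A n. Smat \<cdot>\<^sub>m zpow Tmat n \<cdot>\<^sub>m A) (Mseq xs) ys"
    by (simp add: Mseq_def)
  then show ?thesis
    by (simp only: Mseq_foldl)
qed

lemma Mseq_rep: "Mseq (rep k ns) = mpow (Mseq ns) k"
  by (induction k) (simp_all add: rep_def Mseq_append mpow_Suc_right)

lemma G18_Mseq: "Mseq ns \<in> G18"
  by (induction ns) (simp_all add: Mseq_Cons G18.G_id G18_mmul G18_generators G18_zpow_Tmat)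

lemma orbit18_mobius:
  assumes "h \<in> G18"
  shows "orbit18 (mobius h p) = orbit18 p"
proof -
  have "mobius g (mobius h p) = mobius (g \<cdot>\<^sub>m h) p" "mobius g p = mobius (g \<cdot>\<^sub>m minv h) (mobius h p)"
    for g
    using assms by (simp_all add: mobius_mmul G18_mdet mdet_minv G18_minv mobius_minv_cancel)
  then show ?thesis
    unfolding orbit18_def using assms G18_mmul G18_minv by metis
qed

lemma orbit18_self: "p \<in> orbit18 p"
  unfolding orbit18_def using G18.G_id by force

section \<open>The fields \<open>K\<^sub>1\<^sub>8\<close> and \<open>\<lambda>K\<^sub>1\<^sub>8\<close>\<close>

lemma is_subfield_Inter: "(\<And>F. F \<in> \<F> \<Longrightarrow> is_subfield F) \<Longrightarrow> is_subfield (\<Inter>\<F>)"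
  unfolding is_subfield_def by blast

context
  fixes F :: "real set"
  assumes F: "is_subfield F"
begin

lemma subfield_add: "x \<in> F \<Longrightarrow> y \<in> F \<Longrightarrow> x + y \<in> F"
  and subfield_mult: "x \<in> F \<Longrightarrow> y \<in> F \<Longrightarrow> x * y \<in> F"
  and subfield_uminus: "x \<in> F \<Longrightarrow> - x \<in> F"
  and subfield_inverse: "x \<in> F \<Longrightarrow> inverse x \<in> F"
  and subfield_0: "0 \<in> F"
  and subfield_1: "1 \<in> F"
  using F by (simp_all add: is_subfield_def)

lemma subfield_diff: "x \<in> F \<Longrightarrow> y \<in> F \<Longrightarrow> x - y \<in> F"
  using subfield_add subfield_uminus by fastforce

lemma subfield_divide: "x \<in> F \<Longrightarrow> y \<in> F \<Longrightarrow> x / y \<in> F"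
  using subfield_mult subfield_inverse by (simp add: divide_inverse)

lemma subfield_of_nat: "of_nat n \<in> F"
  by (induction n) (simp_all add: subfield_0 subfield_1 subfield_add)

lemma subfield_of_int: "of_int n \<in> F"
proof (cases "n \<ge> 0")
  case True
  then show ?thesis
    using subfield_of_nat[of "nat n"] by simp
next
  case False
  then show ?thesis
    using subfield_uminus[OF subfield_of_nat[of "nat (- n)"]] by simp
qed

end

lemma subfield_K18: "is_subfield K18"
  unfolding K18_def by (rule is_subfield_Inter) blast

lemma lam_sq_K18: "lam\<^sup>2 \<in> K18"
  unfolding K18_def by blast

lemmas K18_add = subfield_add[OF subfield_K18]
  and K18_mult = subfield_mult[OF subfield_K18]
  and K18_uminus = subfield_uminus[OF subfield_K18]
  and K18_diff = subfield_diff[OF subfield_K18]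
  and K18_divide = subfield_divide[OF subfield_K18]
  and K18_of_int = subfield_of_int[OF subfield_K18]
  and K18_of_nat = subfield_of_nat[OF subfield_K18]

lemma lamK_iff: "x \<in> lamK \<longleftrightarrow> (\<exists>y\<in>K18. x = lam * y)"
  unfolding lamK_def by blast

text \<open>\<open>\<rat>(\<lambda>) = K\<^sub>1\<^sub>8 \<oplus> \<lambda>K\<^sub>1\<^sub>8\<close> is graded by the parity of the power of \<open>\<lambda>\<close>.\<close>

definition Kpiece :: "bool \<Rightarrow> real set" where
  "Kpiece e = (if e then lamK else K18)"

lemma Kpiece_0: "0 \<in> Kpiece e"
  using subfield_0[OF subfield_K18] by (auto simp: Kpiece_def lamK_iff)

lemma Kpiece_iff: "x \<in> Kpiece e \<longleftrightarrow> (\<exists>u\<in>K18. x = (if e then lam * u else u))"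
  by (auto simp: Kpiece_def lamK_iff)

lemma Kpiece_add: "x \<in> Kpiece e \<Longrightarrow> y \<in> Kpiece e \<Longrightarrow> x + y \<in> Kpiece e"
  unfolding Kpiece_iff by (metis K18_add distrib_left)

lemma Kpiece_mult: "x \<in> Kpiece e \<Longrightarrow> y \<in> Kpiece e' \<Longrightarrow> x * y \<in> Kpiece (e \<noteq> e')"
proof -
  assume "x \<in> Kpiece e" "y \<in> Kpiece e'"
  then obtain u v where uv: "u \<in> K18" "v \<in> K18"
    and x: "x = (if e then lam * u else u)" and y: "y = (if e' then lam * v else v)"
    unfolding Kpiece_iff by blast
  have "x * y = (if e \<noteq> e' then lam * (u * v) else (if e then lam\<^sup>2 else 1) * (u * v))"
    by (simp add: x y power2_eq_square)
  moreover have "(if e then lam\<^sup>2 else 1) * (u * v) \<in> K18"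
    using uv lam_sq_K18 subfield_1[OF subfield_K18] by (simp add: K18_mult)
  ultimately show ?thesis
    unfolding Kpiece_iff using uv K18_mult by (metis (full_types))
qed

section \<open>The elliptic element \<open>U = S T\<close> of order 18\<close>

definition sin_ratio :: "nat \<Rightarrow> real" where
  "sin_ratio j = sin (real j * (pi / 18)) / sin (pi / 18)"

lemma sin_pi_18_pos: "sin (pi / 18) > 0"
  by (rule sin_gt_zero) simp_all

lemma sin_ratio_Suc_Suc: "sin_ratio (Suc (Suc j)) = lam * sin_ratio (Suc j) - sin_ratio j"
proof -
  let ?x = "real (Suc j) * (pi / 18)" and ?t = "pi / 18"
  have "real (Suc (Suc j)) * ?t = ?x + ?t" "real j * ?t = ?x - ?t"
    by (simp_all add: algebra_simps)
  moreover have "sin (?x + ?t) + sin (?x - ?t) = 2 * cos ?t * sin ?x"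
    by (simp add: sin_add sin_diff)
  ultimately show ?thesis
    using sin_pi_18_pos by (simp add: sin_ratio_def lam_def field_simps)
qed

lemma sin_ratio_pos: "1 \<le> j \<Longrightarrow> j \<le> 17 \<Longrightarrow> sin_ratio j > 0"
proof -
  assume j: "1 \<le> j" "j \<le> 17"
  then have "real j * (pi / 18) \<le> 17 * (pi / 18)"
    by (intro mult_right_mono) auto
  then have "sin (real j * (pi / 18)) > 0"
    using j by (intro sin_gt_zero) auto
  then show ?thesis
    using sin_pi_18_pos by (simp add: sin_ratio_def)
qed

lemma sin_ratio_reflect: "j \<le> 18 \<Longrightarrow> sin_ratio (18 - j) = sin_ratio j"
proof -
  assume "j \<le> 18"
  then have "real (18 - j) * (pi / 18) = pi - real j * (pi / 18)"
    by (simp add: of_nat_diff algebra_simps)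
  then show ?thesis
    unfolding sin_ratio_def by (simp only: sin_pi_minus)
qed

lemma sin_ratio_nonneg: "j \<le> 18 \<Longrightarrow> sin_ratio j \<ge> 0"
  using sin_ratio_pos[of j] sin_ratio_reflect[of 0]
  by (cases "j = 0 \<or> j = 18") (auto simp: sin_ratio_def)

lemma sin_ratio_values:
  "sin_ratio 0 = 0" "sin_ratio 1 = 1" "sin_ratio 2 = lam" "sin_ratio 3 = lam\<^sup>2 - 1"
  "sin_ratio 15 = lam\<^sup>2 - 1" "sin_ratio 16 = lam" "sin_ratio 17 = 1" "sin_ratio 18 = 0"
  "sin_ratio 19 = - 1"
proof -
  show 0: "sin_ratio 0 = 0" and 1: "sin_ratio 1 = 1"
    using sin_pi_18_pos by (simp_all add: sin_ratio_def)
  show 2: "sin_ratio 2 = lam" and 3: "sin_ratio 3 = lam\<^sup>2 - 1"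
    using sin_ratio_Suc_Suc[of 0] sin_ratio_Suc_Suc[of 1] 0 1
    by (simp_all add: numeral_eq_Suc power2_eq_square)
  show "sin_ratio 15 = lam\<^sup>2 - 1" "sin_ratio 16 = lam" "sin_ratio 17 = 1" "sin_ratio 18 = 0"
    using sin_ratio_reflect[of 3] sin_ratio_reflect[of 2] sin_ratio_reflect[of 1]
      sin_ratio_reflect[of 0] 0 1 2 3 by simp_all
  have "real 19 * (pi / 18) = pi / 18 + pi"
    by simp
  then show "sin_ratio 19 = - 1"
    using sin_pi_18_pos by (simp only: sin_ratio_def sin_periodic_pi) simp
qed

lemma lam_ge_1: "lam \<ge> 1"
proof -
  have "cos (pi / 3) \<le> cos (pi / 18)"
    by (subst cos_mono_le_eq) auto
  then show ?thesis
    by (simp add: lam_def cos_60)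
qed

lemma lam_pos: "lam > 0"
  using lam_ge_1 by simp

lemma lam_sq_gt_1: "lam\<^sup>2 > 1"
  using sin_ratio_pos[of 3] by (simp add: sin_ratio_values)

definition Umat :: mat2 where
  "Umat = Smat \<cdot>\<^sub>m Tmat"

lemma Umat_eq: "Umat = Mat2 0 (- 1) 1 lam"
  by (rule mat2_eqI) (simp_all add: Umat_def Smat_def Tmat_def)

lemma mdet_Umat: "mdet Umat = 1"
  by (simp add: Umat_def mdet_mmul mdet_Smat mdet_Tmat)

lemma mpow_Umat:
  "mpow Umat (Suc j)
    = Mat2 (- sin_ratio j) (- sin_ratio (Suc j)) (sin_ratio (Suc j)) (sin_ratio (Suc (Suc j)))"
proof (induction j)
  case 0
  show ?case
    using sin_ratio_values(1-3) by (simp add: Umat_eq numeral_2_eq_2 mpow_Suc)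
next
  case (Suc j)
  show ?case
    unfolding mpow_Suc[of Umat "Suc j"] Suc
    by (rule mat2_eqI) (simp_all add: Umat_eq sin_ratio_Suc_Suc[of "Suc j"] sin_ratio_Suc_Suc[of j])
qed

lemma mpow_Umat_17: "mpow Umat 17 = Mat2 (- lam) (- 1) 1 0"
proof -
  have "Suc 16 = 17" "Suc 17 = 18"
    by simp_all
  then show ?thesis
    using mpow_Umat[of 16] by (simp add: sin_ratio_values)
qed

lemma mpow_Umat_18: "mpow Umat 18 = mneg mid"
proof -
  have "Suc 16 = 17" "Suc 17 = 18" "Suc 18 = 19"
    by simp_all
  then show ?thesis
    using mpow_Umat[of 17] by (simp add: sin_ratio_values mneg_def mid_def)
qed

lemma Tmat_via_Umat: "Tmat = mneg (Smat \<cdot>\<^sub>m Umat)" "minv Tmat = mneg (mpow Umat 17 \<cdot>\<^sub>m Smat)"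
  unfolding mpow_Umat_17 minv_Tmat by (rule mat2_eqI; simp add: Umat_eq Smat_def Tmat_def)+

lemma mobius_Umat_add: "mobius (mpow Umat (i + j)) p = mobius (mpow Umat i) (mobius (mpow Umat j) p)"
  by (simp add: mpow_add mobius_mmul mdet_mpow mdet_Umat)

lemma mobius_Umat_cancel: "j \<le> 18 \<Longrightarrow> mobius (mpow Umat (18 - j)) (mobius (mpow Umat j) p) = p"
  using mobius_Umat_add[of "18 - j" j p] by (simp add: mpow_Umat_18)

lemma mobius_Smat_Some: "x \<noteq> 0 \<Longrightarrow> mobius Smat (Some x) = Some (- 1 / x)"
  by (simp add: mobius_def Smat_def)

lemma mobius_Smat_Smat: "mobius Smat (mobius Smat p) = p"
  by (simp add: mobius_mmul[symmetric] mdet_Smat Smat_Smat)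

section \<open>Ping-pong coding of points\<close>

text \<open>For positive \<open>p\<close>, the point \<open>S p\<close> lies in at most one of the disjoint sets
  \<open>U\<^sup>j(0, \<infinity>) \<subseteq> (-\<infinity>, 0)\<close>, \<open>1 \<le> j \<le> 17\<close>; if \<open>S p = U\<^sup>j q\<close> with \<open>q > 0\<close>, then \<open>j\<close> is the
  first digit of \<open>p\<close> and \<open>q\<close> the shifted point.\<close>

definition pos_point :: "real option \<Rightarrow> bool" where
  "pos_point p \<longleftrightarrow> (\<exists>x>0. p = Some x)"

lemma mobius_Umat_pos_neg:
  assumes "1 \<le> j" "j \<le> 17" "pos_point p"
  shows "\<exists>y<0. mobius (mpow Umat j) p = Some y"
proof -
  obtain i where i: "j = Suc i"
    using assms(1) by (cases j) auto
  obtain x where x: "x > 0" "p = Some x"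
    using assms(3) by (auto simp: pos_point_def)
  have s: "sin_ratio (Suc i) > 0" "sin_ratio i \<ge> 0" "sin_ratio (Suc (Suc i)) \<ge> 0"
    using sin_ratio_pos[of "Suc i"] sin_ratio_nonneg[of i] sin_ratio_nonneg[of "Suc (Suc i)"] assms i
    by simp_all
  then have den: "sin_ratio (Suc i) * x + sin_ratio (Suc (Suc i)) > 0"
    using x by (simp add: add_pos_nonneg)
  have "sin_ratio i * x \<ge> 0"
    using s x by simp
  then have "- sin_ratio i * x - sin_ratio (Suc i) < 0"
    using s by simp
  with den show ?thesis
    using x by (simp add: i mpow_Umat mobius_def divide_neg_pos)
qed

lemma mobius_Umat_pos_unique:
  assumes "i < 18" "j < 18" "pos_point z" "pos_point z'"
    and "mobius (mpow Umat i) z = mobius (mpow Umat j) z'"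
  shows "i = j \<and> z = z'"
proof -
  have *: "i = j \<and> z = z'" if ij: "i \<le> j" "i < 18" "j < 18" and pos: "pos_point z" "pos_point z'"
    and "mobius (mpow Umat i) z = mobius (mpow Umat j) z'" for i j z z'
  proof -
    have "z = mobius (mpow Umat (18 - i)) (mobius (mpow Umat j) z')"
      using mobius_Umat_cancel[of i z] that by simp
    also have "\<dots> = mobius (mpow Umat (j - i)) z'"
      using mobius_Umat_add[of 18 "j - i" z'] mobius_Umat_add[of "18 - i" j z'] that
      by (simp add: mpow_Umat_18)
    finally have z: "z = mobius (mpow Umat (j - i)) z'" .
    have "\<not> (1 \<le> j - i)"
    proof
      assume "1 \<le> j - i"
      moreover have "j - i \<le> 17"
        using ij by simp
      ultimately obtain y where "y < 0" "mobius (mpow Umat (j - i)) z' = Some y"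
        using mobius_Umat_pos_neg pos(2) by blast
      then show False
        using pos(1) z by (auto simp: pos_point_def)
    qed
    then show ?thesis
      using z that by simp
  qed
  show ?thesis
    using *[of i j z z'] *[of j i z' z] assms by (metis nat_le_linear)
qed

definition base_point :: "real option \<Rightarrow> real option \<Rightarrow> bool" where
  "base_point p z \<longleftrightarrow> pos_point z \<and> (\<exists>j<18. p = mobius (mpow Umat j) z)"

definition shift_step :: "real option \<Rightarrow> real option \<Rightarrow> bool" where
  "shift_step p q \<longleftrightarrow> pos_point p \<and> base_point (mobius Smat p) q"

definition shift_chain :: "(nat \<Rightarrow> real option) \<Rightarrow> bool" where
  "shift_chain f \<longleftrightarrow> (\<forall>n. shift_step (f n) (f (Suc n)))"

definition coded :: "real option \<Rightarrow> bool" where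
  "coded p \<longleftrightarrow> (\<exists>f. base_point p (f 0) \<and> shift_chain f)"

definition tail_equiv :: "real option \<Rightarrow> real option \<Rightarrow> bool" where
  "tail_equiv p q \<longleftrightarrow> (\<exists>f g m n. base_point p (f 0) \<and> base_point q (g 0)
      \<and> shift_chain f \<and> shift_chain g \<and> f m = g n)"

lemma base_point_unique: "base_point p z \<Longrightarrow> base_point p z' \<Longrightarrow> z = z'"
  unfolding base_point_def using mobius_Umat_pos_unique by metis

lemma base_point_pos: "pos_point p \<Longrightarrow> base_point p p"
  unfolding base_point_def by (auto intro: exI[of _ 0])

lemma base_point_Umat: "base_point p z \<Longrightarrow> base_point (mobius Umat p) z"
proof -
  assume "base_point p z"
  then obtain j where j: "pos_point z" "j < 18" "p = mobius (mpow Umat j) z"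
    by (auto simp: base_point_def)
  then have "mobius Umat p = mobius (mpow Umat (Suc j)) z"
    by (simp add: mpow_Suc mobius_mmul mdet_mpow mdet_Umat)
  moreover have "mobius (mpow Umat 18) z = mobius (mpow Umat 0) z"
    by (simp add: mpow_Umat_18)
  ultimately show ?thesis
    using j unfolding base_point_def by (metis Suc_lessI zero_less_numeral)
qed

lemma not_base_point_None: "\<not> base_point None z"
proof
  assume "base_point None z"
  then obtain j where "pos_point z" "None = mobius (mpow Umat j) z" "j < 18"
    by (auto simp: base_point_def)
  then show False
    using mobius_Umat_pos_neg[of j z] by (cases "j = 0") (auto simp: pos_point_def)
qed

lemma shift_chain_unique:
  assumes "shift_chain f" "shift_chain g" "f 0 = g 0"
  shows "f n = g n"
proof (induction n)
  case (Suc n)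
  then show ?case
    using assms(1,2) base_point_unique unfolding shift_chain_def shift_step_def by metis
qed (use assms(3) in simp)

lemma shift_chain_tail: "shift_chain f \<Longrightarrow> shift_chain (\<lambda>n. f (n + k))"
  unfolding shift_chain_def by simp

lemma shift_chain_Cons: "shift_step p (f 0) \<Longrightarrow> shift_chain f \<Longrightarrow> shift_chain (case_nat p f)"
  unfolding shift_chain_def by (simp split: nat.split)

lemma shift_chain_sync:
  assumes "shift_chain f" "shift_chain g" "f m = g n"
  shows "f (m + i) = g (n + i)"
proof -
  have "(\<lambda>k. f (k + m)) i = (\<lambda>k. g (k + n)) i"
    by (rule shift_chain_unique[OF shift_chain_tail[OF assms(1)] shift_chain_tail[OF assms(2)]])
      (simp add: assms(3))
  then show ?thesis
    by (simp add: add.commute)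
qed

lemma tail_equiv_sym: "tail_equiv p q \<Longrightarrow> tail_equiv q p"
  unfolding tail_equiv_def by metis

lemma tail_equiv_refl: "coded p \<Longrightarrow> tail_equiv p p"
  unfolding tail_equiv_def coded_def by blast

lemma tail_equiv_coded: "tail_equiv p q \<Longrightarrow> coded q"
  unfolding tail_equiv_def coded_def by blast

lemma tail_equiv_trans:
  assumes "tail_equiv p q" "tail_equiv q r"
  shows "tail_equiv p r"
proof -
  obtain f g m n where 1: "base_point p (f 0)" "base_point q (g 0)" "shift_chain f" "shift_chain g"
    "f m = g n"
    using assms(1) unfolding tail_equiv_def by blast
  obtain g' h m' n' where 2: "base_point q (g' 0)" "base_point r (h 0)" "shift_chain g'" "shift_chain h"
    "g' m' = h n'"
    using assms(2) unfolding tail_equiv_def by blast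
  have "g i = g' i" for i
    using shift_chain_unique[OF 1(4) 2(3)] base_point_unique[OF 1(2) 2(1)] .
  then have "f (m + m') = h (n' + n)"
    using shift_chain_sync[OF 1(3-5), of m'] shift_chain_sync[OF 2(3-5), of n]
    by (simp add: add.commute)
  then show ?thesis
    unfolding tail_equiv_def using 1 2 by blast
qed

lemma tail_equiv_Smat:
  assumes "coded p"
  shows "tail_equiv p (mobius Smat p)"
proof -
  obtain f j where f: "shift_chain f" "pos_point (f 0)" "j < 18" "p = mobius (mpow Umat j) (f 0)"
    using assms by (auto simp: coded_def base_point_def)
  show ?thesis
  proof (cases "j = 0")
    case True
    have "shift_step (f 0) (f 1)"
      using f(1) by (simp add: shift_chain_def)
    then have "base_point (mobius Smat p) (f 1)"
      using True f(4) by (simp add: shift_step_def)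
    then show ?thesis
      unfolding tail_equiv_def using f shift_chain_tail[OF f(1), of 1] base_point_pos True
      by (intro exI[of _ f] exI[of _ "\<lambda>n. f (n + 1)"] exI[of _ 1] exI[of _ 0]) simp
  next
    case False
    then obtain y where "y < 0" "p = Some y"
      using mobius_Umat_pos_neg[of j "f 0"] f by auto
    then have Sp: "pos_point (mobius Smat p)"
      by (simp add: mobius_Smat_Some pos_point_def)
    have "base_point p (f 0)"
      using f by (auto simp: base_point_def)
    then have "shift_step (mobius Smat p) (f 0)"
      using Sp by (simp add: shift_step_def mobius_Smat_Smat)
    then have "tail_equiv (mobius Smat p) p"
      unfolding tail_equiv_def using f shift_chain_Cons[of "mobius Smat p" f] Sp base_point_pos
        \<open>base_point p (f 0)\<close>
      by (intro exI[of _ "case_nat (mobius Smat p) f"] exI[of _ f] exI[of _ 1] exI[of _ 0]) simp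
    then show ?thesis
      by (rule tail_equiv_sym)
  qed
qed

lemma tail_equiv_Umat: "coded p \<Longrightarrow> tail_equiv p (mobius Umat p)"
  unfolding coded_def tail_equiv_def using base_point_Umat by blast

lemma tail_equiv_mpow_Umat: "coded p \<Longrightarrow> tail_equiv p (mobius (mpow Umat n) p)"
proof (induction n)
  case (Suc n)
  then show ?case
    using tail_equiv_Umat[OF tail_equiv_coded] tail_equiv_trans
    by (metis mobius_Umat_add plus_1_eq_Suc mpow_1)
qed (simp add: tail_equiv_refl)

lemma tail_equiv_G18:
  assumes "h \<in> G18" "coded p"
  shows "tail_equiv p (mobius h p)"
  using assms(1)
proof (induction rule: G18.induct)
  case G_id
  then show ?case
    using assms(2) by (simp add: tail_equiv_refl)
next
  case (G_S A)
  then show ?case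
    using tail_equiv_Smat[OF tail_equiv_coded] tail_equiv_trans
    by (metis G18_mdet mobius_mmul one_neq_zero)
next
  case (G_T A)
  have "mobius (Tmat \<cdot>\<^sub>m A) p = mobius Smat (mobius Umat (mobius A p))"
    using G_T by (simp add: Tmat_via_Umat(1) mobius_mmul G18_mdet mdet_Umat)
  then show ?case
    using G_T tail_equiv_Smat[OF tail_equiv_coded] tail_equiv_Umat[OF tail_equiv_coded] tail_equiv_trans
    by metis
next
  case (G_Sinv A)
  then show ?case
    using tail_equiv_Smat[OF tail_equiv_coded] tail_equiv_trans
    by (metis G18_mdet mobius_mmul one_neq_zero minv_Smat mmul_mneg(1) mobius_mneg)
next
  case (G_Tinv A)
  have "mobius (minv Tmat \<cdot>\<^sub>m A) p = mobius (mpow Umat 17) (mobius Smat (mobius A p))"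
    using G_Tinv by (simp add: Tmat_via_Umat(2) mobius_mmul G18_mdet mdet_Smat)
  then show ?case
    using G_Tinv tail_equiv_Smat[OF tail_equiv_coded] tail_equiv_mpow_Umat[OF tail_equiv_coded]
      tail_equiv_trans
    by metis
qed

lemma coded_G18: "h \<in> G18 \<Longrightarrow> coded p \<Longrightarrow> coded (mobius h p)"
  using tail_equiv_G18 tail_equiv_coded by blast

lemma not_coded_None: "\<not> coded None"
  by (simp add: coded_def not_base_point_None)

section \<open>Words in the generators \<open>S U\<^sup>j\<close> and their fixed points\<close>

definition digit_mat :: "nat \<Rightarrow> mat2" where
  "digit_mat j = mneg (Smat \<cdot>\<^sub>m mpow Umat j)"

definition word_mat :: "nat list \<Rightarrow> mat2" where
  "word_mat ws = foldr (\<lambda>j M. digit_mat j \<cdot>\<^sub>m M) ws mid"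

definition valid_word :: "nat list \<Rightarrow> bool" where
  "valid_word ws \<longleftrightarrow> (\<forall>j\<in>set ws. 1 \<le> j \<and> j \<le> 17)"

lemma digit_mat_eq:
  "1 \<le> j \<Longrightarrow> digit_mat j = Mat2 (sin_ratio j) (sin_ratio (j + 1)) (sin_ratio (j - 1)) (sin_ratio j)"
  by (cases j) (simp_all add: digit_mat_def mpow_Umat Smat_def mmul_def mneg_def)

lemma word_mat_Nil [simp]: "word_mat [] = mid"
  and word_mat_Cons: "word_mat (j # ws) = digit_mat j \<cdot>\<^sub>m word_mat ws"
  by (simp_all add: word_mat_def)

lemma word_mat_append: "word_mat (xs @ ys) = word_mat xs \<cdot>\<^sub>m word_mat ys"
  by (induction xs) (simp_all add: word_mat_Cons mmul_assoc)

lemma word_mat_replicate: "word_mat (concat (replicate k ws)) = mpow (word_mat ws) k"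
  by (induction k) (simp_all add: word_mat_append mpow_Suc)

lemma mdet_digit_mat: "mdet (digit_mat j) = 1"
  by (simp add: digit_mat_def mdet_mmul mdet_Smat mdet_mpow mdet_Umat)

lemma mdet_word_mat: "mdet (word_mat ws) = 1"
  by (induction ws) (simp_all add: word_mat_Cons mdet_mmul mdet_digit_mat)

lemma mobius_word_mat_Cons:
  "mobius (word_mat (j # ws)) p = mobius (digit_mat j) (mobius (word_mat ws) p)"
  by (simp add: word_mat_Cons mobius_mmul mdet_word_mat)

lemma mobius_Smat_digit_mat: "mobius Smat (mobius (digit_mat j) z) = mobius (mpow Umat j) z"
  by (simp add: digit_mat_def mobius_mmul[symmetric] mdet_mmul mdet_Smat mdet_mpow mdet_Umat
      mmul_assoc[symmetric] Smat_Smat)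

lemma digit_mat_shift_step:
  assumes "1 \<le> j" "j \<le> 17" "pos_point z"
  shows "shift_step (mobius (digit_mat j) z) z" "pos_point (mobius (digit_mat j) z)"
proof -
  obtain y where y: "y < 0" "mobius (mpow Umat j) z = Some y"
    using mobius_Umat_pos_neg[OF assms] by blast
  have "mobius (digit_mat j) z = mobius Smat (Some y)"
    using mobius_Smat_digit_mat[of j z] y(2) mobius_Smat_Smat by metis
  then show pos: "pos_point (mobius (digit_mat j) z)"
    using y(1) by (simp add: mobius_Smat_Some pos_point_def)
  have "base_point (mobius Smat (mobius (digit_mat j) z)) z"
    using assms by (auto simp: base_point_def mobius_Smat_digit_mat intro!: exI[of _ j])
  with pos show "shift_step (mobius (digit_mat j) z) z"
    by (simp add: shift_step_def)
qed

lemma word_mat_pos: "valid_word ws \<Longrightarrow> pos_point z \<Longrightarrow> pos_point (mobius (word_mat ws) z)"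
  by (induction ws) (auto simp: valid_word_def mobius_word_mat_Cons digit_mat_shift_step(2))

text \<open>The code of a positive fixed point of a nonempty valid word \<open>ws\<close> is the periodic
  sequence \<open>ws ws ws \<dots>\<close>; its \<open>i\<close>-th shift is the point \<open>periodic_chain ws x i\<close>.\<close>

definition periodic_chain :: "nat list \<Rightarrow> real option \<Rightarrow> nat \<Rightarrow> real option" where
  "periodic_chain ws x i = mobius (word_mat (drop (i mod length ws) ws)) x"

lemma periodic_chain_Suc:
  assumes "ws \<noteq> []" "mobius (word_mat ws) x = x"
  shows "periodic_chain ws x (Suc i) = mobius (word_mat (drop (Suc (i mod length ws)) ws)) x"
proof (cases "Suc (i mod length ws) < length ws")
  case True
  then show ?thesis
    by (simp add: periodic_chain_def mod_Suc)
next
  case False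
  then have "Suc (i mod length ws) = length ws"
    using assms(1) by (metis Suc_lessI length_greater_0_conv mod_less_divisor)
  then show ?thesis
    using assms(2) by (simp add: periodic_chain_def mod_Suc)
qed

lemma periodic_chain_digit:
  assumes "ws \<noteq> []" "mobius (word_mat ws) x = x"
  shows "periodic_chain ws x i
    = mobius (digit_mat (ws ! (i mod length ws))) (periodic_chain ws x (Suc i))"
  using periodic_chain_Suc[OF assms, of i] assms(1)
  by (simp add: periodic_chain_def Cons_nth_drop_Suc[symmetric] mobius_word_mat_Cons)

lemma periodic_chain:
  assumes ws: "valid_word ws" "ws \<noteq> []" and x: "pos_point x" "mobius (word_mat ws) x = x"
  shows "periodic_chain ws x 0 = x" "shift_chain (periodic_chain ws x)"
    "pos_point (periodic_chain ws x i)" "ws ! (i mod length ws) < 18"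
    "mobius Smat (periodic_chain ws x i)
      = mobius (mpow Umat (ws ! (i mod length ws))) (periodic_chain ws x (Suc i))"
proof -
  show "periodic_chain ws x 0 = x"
    using x by (simp add: periodic_chain_def)
  have digit: "1 \<le> ws ! (n mod length ws) \<and> ws ! (n mod length ws) \<le> 17" for n
    using ws by (simp add: valid_word_def)
  have next_pos: "pos_point (periodic_chain ws x (Suc n))" for n
    unfolding periodic_chain_Suc[OF ws(2) x(2)]
    using ws(1) x(1) by (intro word_mat_pos) (auto simp: valid_word_def dest: in_set_dropD)
  note point = periodic_chain_digit[OF ws(2) x(2)]
  show "shift_chain (periodic_chain ws x)"
    unfolding shift_chain_def
  proof
    fix n
    show "shift_step (periodic_chain ws x n) (periodic_chain ws x (Suc n))"
      unfolding point[of n] using digit[of n] next_pos[of n] by (simp add: digit_mat_shift_step(1))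
  qed
  show "pos_point (periodic_chain ws x i)"
    unfolding point[of i] using digit[of i] next_pos[of i] by (simp add: digit_mat_shift_step(2))
  show "ws ! (i mod length ws) < 18"
    using digit[of i] by simp
  show "mobius Smat (periodic_chain ws x i)
      = mobius (mpow Umat (ws ! (i mod length ws))) (periodic_chain ws x (Suc i))"
    unfolding point[of i] by (rule mobius_Smat_digit_mat)
qed

lemma tail_equiv_periodic_digits:
  assumes ws: "valid_word ws" "ws \<noteq> []" "pos_point x" "mobius (word_mat ws) x = x"
    and vs: "valid_word vs" "vs \<noteq> []" "pos_point y" "mobius (word_mat vs) y = y"
    and "tail_equiv x y"
  shows "\<exists>m n. \<forall>i. ws ! ((m + i) mod length ws) = vs ! ((n + i) mod length vs)"
proof -
  obtain f g m n where fg: "base_point x (f 0)" "base_point y (g 0)" "shift_chain f" "shift_chain g"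
    "f m = g n"
    using assms(9) unfolding tail_equiv_def by blast
  note cx = periodic_chain[OF ws] and cy = periodic_chain[OF vs]
  have "f 0 = periodic_chain ws x 0" "g 0 = periodic_chain vs y 0"
    using base_point_unique[OF fg(1) base_point_pos[OF ws(3)]]
      base_point_unique[OF fg(2) base_point_pos[OF vs(3)]] cx(1) cy(1) by simp_all
  then have "f i = periodic_chain ws x i" "g i = periodic_chain vs y i" for i
    using shift_chain_unique[OF fg(3) cx(2)] shift_chain_unique[OF fg(4) cy(2)] by blast+
  then have "periodic_chain ws x (m + i) = periodic_chain vs y (n + i)" for i
    using shift_chain_sync[OF fg(3-5)] by simp
  then have "mobius (mpow Umat (ws ! ((m + i) mod length ws))) (periodic_chain ws x (Suc (m + i)))
      = mobius (mpow Umat (vs ! ((n + i) mod length vs))) (periodic_chain vs y (Suc (n + i)))" for i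
    using cx(5)[of "m + i"] cy(5)[of "n + i"] by simp
  then have "ws ! ((m + i) mod length ws) = vs ! ((n + i) mod length vs)" for i
    using mobius_Umat_pos_unique[OF cx(4)[of "m + i"] cy(4)[of "n + i"] cx(3) cy(3)] by blast
  then show ?thesis
    by blast
qed

lemma digit_mat_reflect: "j \<le> 18 \<Longrightarrow> digit_mat (18 - j) \<cdot>\<^sub>m Smat \<cdot>\<^sub>m digit_mat j = Smat"
proof -
  assume j: "j \<le> 18"
  have "digit_mat (18 - j) \<cdot>\<^sub>m Smat \<cdot>\<^sub>m digit_mat j
      = Smat \<cdot>\<^sub>m (mpow Umat (18 - j) \<cdot>\<^sub>m (Smat \<cdot>\<^sub>m Smat) \<cdot>\<^sub>m mpow Umat j)"
    by (simp add: digit_mat_def mmul_assoc)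
  also have "\<dots> = Smat"
    using j by (simp add: Smat_Smat mpow_add[symmetric] mpow_Umat_18)
  finally show ?thesis .
qed

definition reflect_word :: "nat list \<Rightarrow> nat list" where
  "reflect_word ws = map (\<lambda>j. 18 - j) (rev ws)"

lemma word_mat_reflect:
  "valid_word ws \<Longrightarrow> word_mat (reflect_word ws) \<cdot>\<^sub>m Smat \<cdot>\<^sub>m word_mat ws = Smat"
proof (induction ws)
  case (Cons j ws)
  then have "valid_word ws" "j \<le> 18"
    by (auto simp: valid_word_def)
  have "word_mat (reflect_word (j # ws)) \<cdot>\<^sub>m Smat \<cdot>\<^sub>m word_mat (j # ws)
      = word_mat (reflect_word ws) \<cdot>\<^sub>m (digit_mat (18 - j) \<cdot>\<^sub>m Smat \<cdot>\<^sub>m digit_mat j) \<cdot>\<^sub>m word_mat ws"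
    by (simp add: reflect_word_def word_mat_append word_mat_Cons mmul_assoc)
  also have "\<dots> = Smat"
    using Cons.IH digit_mat_reflect[of j] \<open>valid_word ws\<close> \<open>j \<le> 18\<close> by simp
  finally show ?case .
qed (simp add: reflect_word_def)

definition cone_mat :: "mat2 \<Rightarrow> bool" where
  "cone_mat A \<longleftrightarrow> ent11 A \<ge> 1 \<and> ent22 A \<ge> 1 \<and> ent12 A \<ge> 0 \<and> ent21 A \<ge> 0"

lemma cone_mat_mmul:
  assumes "cone_mat A" "cone_mat B"
  shows "cone_mat (A \<cdot>\<^sub>m B)"
    and "ent12 (A \<cdot>\<^sub>m B) \<ge> max (ent12 A) (ent12 B)" "ent21 (A \<cdot>\<^sub>m B) \<ge> max (ent21 A) (ent21 B)"
proof -
  obtain a b c d where A: "A = Mat2 a b c d"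
    by (cases A)
  obtain e f g h where B: "B = Mat2 e f g h"
    by (cases B)
  have a: "a \<ge> 1" "d \<ge> 1" "b \<ge> 0" "c \<ge> 0" and b: "e \<ge> 1" "h \<ge> 1" "f \<ge> 0" "g \<ge> 0"
    using assms A B by (auto simp: cone_mat_def)
  have "a * e \<ge> 1" "d * h \<ge> 1"
    using mult_mono[of 1 a 1 e] mult_mono[of 1 d 1 h] a b by simp_all
  moreover have "a * f \<ge> f" "b * h \<ge> b" "c * e \<ge> c" "d * g \<ge> g"
    using mult_right_mono[of 1 a f] mult_left_mono[of 1 h b] mult_left_mono[of 1 e c]
      mult_right_mono[of 1 d g] a b by simp_all
  moreover have "b * g \<ge> 0" "c * f \<ge> 0"
    using a b by simp_all
  ultimately have "1 \<le> a * e + b * g" "1 \<le> c * f + d * h" "b \<le> a * f + b * h" "f \<le> a * f + b * h"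
    "c \<le> c * e + d * g" "g \<le> c * e + d * g"
    using a b by linarith+
  then show "cone_mat (A \<cdot>\<^sub>m B)"
    and "ent12 (A \<cdot>\<^sub>m B) \<ge> max (ent12 A) (ent12 B)" "ent21 (A \<cdot>\<^sub>m B) \<ge> max (ent21 A) (ent21 B)"
    using a b unfolding A B cone_mat_def by simp_all
qed

definition admissible :: "nat list \<Rightarrow> bool" where
  "admissible ws \<longleftrightarrow> set ws \<subseteq> {1, 2, 16, 17} \<and> (2 \<in> set ws \<or> 16 \<in> set ws)"

lemma admissible_valid: "admissible ws \<Longrightarrow> valid_word ws"
  by (auto simp: admissible_def valid_word_def)

lemma admissible_nonempty: "admissible ws \<Longrightarrow> ws \<noteq> []"
  by (auto simp: admissible_def)

lemma admissible_reflect: "admissible ws \<Longrightarrow> admissible (reflect_word ws)"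
  by (auto simp: admissible_def reflect_word_def image_iff intro: bexI[of _ 2] bexI[of _ 16])

lemma digit_mat_values:
  "digit_mat 1 = Mat2 1 lam 0 1" "digit_mat 2 = Mat2 lam (lam\<^sup>2 - 1) 1 lam"
  "digit_mat 16 = Mat2 lam 1 (lam\<^sup>2 - 1) lam" "digit_mat 17 = Mat2 1 0 lam 1"
  using sin_ratio_values(2)[simplified]
  by (simp_all add: digit_mat_eq sin_ratio_values del: One_nat_def)

lemma cone_mat_digit: "j \<in> {1, 2, 16, 17} \<Longrightarrow> cone_mat (digit_mat j)"
proof -
  assume "j \<in> {1, 2, 16, 17}"
  then consider "j = 1" | "j = 2" | "j = 16" | "j = 17"
    by blast
  moreover have "lam\<^sup>2 \<ge> 1"
    using lam_ge_1 by (simp add: one_le_power)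
  ultimately show ?thesis
    using lam_ge_1 by cases (simp_all add: cone_mat_def digit_mat_values del: One_nat_def)
qed

lemma word_mat_cone:
  "set ws \<subseteq> {1, 2, 16, 17} \<Longrightarrow> cone_mat (word_mat ws)
    \<and> (\<forall>j\<in>set ws. ent12 (digit_mat j) \<le> ent12 (word_mat ws) \<and> ent21 (digit_mat j) \<le> ent21 (word_mat ws))"
proof (induction ws)
  case Nil
  then show ?case
    by (simp add: cone_mat_def)
next
  case (Cons j ws)
  then have "cone_mat (digit_mat j)" "cone_mat (word_mat ws)"
    by (simp_all add: cone_mat_digit)
  note prod = cone_mat_mmul[OF this]
  have "ent12 (digit_mat i) \<le> ent12 (word_mat (j # ws)) \<and> ent21 (digit_mat i) \<le> ent21 (word_mat (j # ws))"
    if "i \<in> set (j # ws)" for i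
  proof (cases "i = j")
    case True
    then show ?thesis
      using prod(2,3) by (simp add: word_mat_Cons)
  next
    case False
    then have "ent12 (digit_mat i) \<le> ent12 (word_mat ws)" "ent21 (digit_mat i) \<le> ent21 (word_mat ws)"
      using that Cons by simp_all
    then show ?thesis
      using prod(2,3) by (simp add: word_mat_Cons)
  qed
  then show ?case
    using prod(1) by (simp add: word_mat_Cons)
qed

lemma admissible_word_mat:
  assumes "admissible ws"
  shows "cone_mat (word_mat ws)" "ent12 (word_mat ws) > 0" "ent21 (word_mat ws) > 0"
proof -
  have ws: "set ws \<subseteq> {1, 2, 16, 17}" "2 \<in> set ws \<or> 16 \<in> set ws"
    using assms by (simp_all add: admissible_def)
  then show "cone_mat (word_mat ws)"
    using word_mat_cone by blast
  obtain j where j: "j \<in> set ws" "j = 2 \<or> j = 16"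
    using ws(2) by blast
  then have "ent12 (digit_mat j) > 0" "ent21 (digit_mat j) > 0"
    using lam_sq_gt_1 by (auto simp: digit_mat_values)
  then show "ent12 (word_mat ws) > 0" "ent21 (word_mat ws) > 0"
    using word_mat_cone[OF ws(1)] j(1) by fastforce+
qed

lemma positive_mat_fixpoint:
  assumes "a \<ge> 0" "d \<ge> 0" "b > 0" "c > 0"
  shows "\<exists>x>0. mobius (Mat2 a b c d) (Some x) = Some x"
proof -
  define s where "s = sqrt ((a - d)\<^sup>2 + 4 * b * c)"
  have bc: "4 * b * c > 0"
    using assms by simp
  have s2: "s\<^sup>2 = (a - d)\<^sup>2 + 4 * b * c"
    unfolding s_def using bc by (simp add: add_nonneg_pos)
  have "s > \<bar>a - d\<bar>"
    unfolding s_def using bc by (intro real_less_rsqrt) (simp add: power2_abs)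
  then have "a - d + s > 0"
    by linarith
  define x where "x = (a - d + s) / (2 * c)"
  have x: "x > 0" "c * x + d > 0"
    unfolding x_def using \<open>a - d + s > 0\<close> assms by (simp_all add: add_pos_nonneg)
  have "4 * c * (c * x\<^sup>2 + (d - a) * x - b) = (2 * c * x)\<^sup>2 - 2 * (a - d) * (2 * c * x) - 4 * b * c"
    by (simp add: algebra_simps power2_eq_square)
  also have "2 * c * x = a - d + s"
    unfolding x_def using assms by simp
  also have "(a - d + s)\<^sup>2 - 2 * (a - d) * (a - d + s) - 4 * b * c = 0"
    using s2 by (simp add: algebra_simps power2_eq_square)
  finally have "c * x\<^sup>2 + (d - a) * x - b = 0"
    using assms by simp
  then have "a * x + b = x * (c * x + d)"
    by (simp add: algebra_simps power2_eq_square)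
  then show ?thesis
    using x by (intro exI[of _ x]) (simp add: mobius_def)
qed

lemma admissible_fixpoint_exists:
  assumes "admissible ws"
  shows "\<exists>x>0. mobius (word_mat ws) (Some x) = Some x"
proof -
  obtain a b c d where "word_mat ws = Mat2 a b c d"
    by (cases "word_mat ws")
  then show ?thesis
    using admissible_word_mat[OF assms] positive_mat_fixpoint[of a d b c] by (simp add: cone_mat_def)
qed

lemma coded_pos_fixpoint:
  assumes "valid_word ws" "ws \<noteq> []" "pos_point x" "mobius (word_mat ws) x = x"
  shows "coded x"
  unfolding coded_def
  using periodic_chain(1,2)[OF assms] base_point_pos[OF assms(3)]
  by (intro exI[of _ "periodic_chain ws x"]) simp

lemma reflect_word_fixpoint:
  assumes "valid_word ws" "mobius (word_mat ws) y = y"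
  shows "mobius (word_mat (reflect_word ws)) (mobius Smat y) = mobius Smat y"
proof -
  have "mobius (word_mat (reflect_word ws)) (mobius Smat y)
      = mobius (word_mat (reflect_word ws) \<cdot>\<^sub>m Smat \<cdot>\<^sub>m word_mat ws) y"
    using assms(2) by (simp add: mobius_mmul mdet_word_mat mdet_Smat mdet_mmul)
  then show ?thesis
    using word_mat_reflect[OF assms(1)] by simp
qed

text \<open>A negative fixed point of \<open>ws\<close> is carried by \<open>S\<close> to a positive fixed point of the
  reflected word.\<close>

lemma admissible_fixpoint_coded:
  assumes ws: "admissible ws" and fixed: "mobius (word_mat ws) y = y"
  shows "coded y"
proof -
  obtain a b c d where abcd: "word_mat ws = Mat2 a b c d"
    by (cases "word_mat ws")
  have pos: "d \<ge> 1" "b > 0" "c > 0"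
    using admissible_word_mat[OF ws] abcd by (simp_all add: cone_mat_def)
  consider "y = None" | "y = Some 0" | "pos_point y" | r where "r < 0" "y = Some r"
    by (metis linorder_neqE_linordered_idom not_None_eq pos_point_def)
  then show ?thesis
  proof cases
    case 3
    then show ?thesis
      using coded_pos_fixpoint admissible_valid admissible_nonempty ws fixed by blast
  next
    case (4 r)
    then have "pos_point (mobius Smat y)"
      by (simp add: mobius_Smat_Some pos_point_def)
    then have "coded (mobius Smat y)"
      using coded_pos_fixpoint reflect_word_fixpoint[OF admissible_valid[OF ws] fixed]
        admissible_valid admissible_nonempty admissible_reflect[OF ws] by blast
    then show ?thesis
      using coded_G18[OF G18_generators(1)] mobius_Smat_Smat by metis
  qed (use fixed abcd pos in \<open>simp_all add: mobius_def\<close>)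
qed

lemma nth_concat_replicate:
  "i < k * length xs \<Longrightarrow> concat (replicate k xs) ! i = xs ! (i mod length xs)"
proof (induction k arbitrary: i)
  case (Suc k)
  then show ?case
    by (cases "i < length xs") (auto simp: nth_append le_mod_geq)
qed simp

lemma count_list_rotate1: "count_list (rotate1 xs) x = count_list xs x"
  by (cases xs) simp_all

lemma count_list_rotate: "count_list (rotate n xs) x = count_list xs x"
  by (induction n) (simp_all add: rotate_Suc count_list_rotate1)

lemma count_list_concat_replicate: "count_list (concat (replicate k xs)) x = k * count_list xs x"
  by (induction k) simp_all

lemma periodic_density_eq:
  assumes "ws \<noteq> []" "vs \<noteq> []"
    and "\<And>i. ws ! ((m + i) mod length ws) = vs ! ((n + i) mod length vs)"
  shows "length vs * count_list ws d = length ws * count_list vs d"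
proof -
  let ?W = "concat (replicate (length vs) (rotate m ws))"
    and ?V = "concat (replicate (length ws) (rotate n vs))"
  \<comment> \<open>both are the first \<open>|ws| |vs|\<close> terms of the common periodic sequence\<close>
  have "?W = ?V"
  proof (rule nth_equalityI)
    show "length ?W = length ?V"
      by (simp add: length_concat sum_list_replicate)
    fix i assume "i < length ?W"
    then show "?W ! i = ?V ! i"
      using assms by (simp add: length_concat sum_list_replicate nth_concat_replicate nth_rotate
          mod_add_right_eq mult.commute)
  qed
  then show ?thesis
    by (metis count_list_concat_replicate count_list_rotate)
qed

lemma same_orbit_density_eq:
  assumes ws: "admissible ws" "x > 0" "mobius (word_mat ws) (Some x) = Some x"
    and vs: "admissible vs" "y > 0" "mobius (word_mat vs) (Some y) = Some y"
    and orbit: "orbit18 (Some x) = orbit18 (Some y)"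
  shows "length vs * count_list ws d = length ws * count_list vs d"
proof -
  have "Some y \<in> orbit18 (Some x)"
    using orbit orbit18_self[of "Some y"] by simp
  then obtain h where "h \<in> G18" "Some y = mobius h (Some x)"
    unfolding orbit18_def by blast
  then have equiv: "tail_equiv (Some x) (Some y)"
    using tail_equiv_G18 admissible_fixpoint_coded[OF ws(1,3)] by simp
  have "pos_point (Some x)" "pos_point (Some y)"
    using ws(2) vs(2) by (simp_all add: pos_point_def)
  with equiv obtain m n where digits: "\<forall>i. ws ! ((m + i) mod length ws) = vs ! ((n + i) mod length vs)"
    using tail_equiv_periodic_digits[OF admissible_valid[OF ws(1)] admissible_nonempty[OF ws(1)] _ ws(3)
        admissible_valid[OF vs(1)] admissible_nonempty[OF vs(1)] _ vs(3)] by blast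
  show ?thesis
    by (rule periodic_density_eq[OF admissible_nonempty[OF ws(1)] admissible_nonempty[OF vs(1)]])
      (use digits in blast)
qed

section \<open>Lucas sequences and traces of powers\<close>

text \<open>The Lucas sequences \<open>U\<^sub>n(t, 1)\<close> and \<open>V\<^sub>n(t, 1)\<close>; \<open>lucasU_prev t n\<close> is \<open>U\<^sub>n\<^sub>-\<^sub>1\<close>,
  including \<open>U\<^sub>-\<^sub>1 = -1\<close>.\<close>

fun lucasU :: "real \<Rightarrow> nat \<Rightarrow> real" where
  "lucasU t 0 = 0"
| "lucasU t (Suc 0) = 1"
| "lucasU t (Suc (Suc n)) = t * lucasU t (Suc n) - lucasU t n"

fun lucasV :: "real \<Rightarrow> nat \<Rightarrow> real" where
  "lucasV t 0 = 2"
| "lucasV t (Suc 0) = t"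
| "lucasV t (Suc (Suc n)) = t * lucasV t (Suc n) - lucasV t n"

definition lucasU_prev :: "real \<Rightarrow> nat \<Rightarrow> real" where
  "lucasU_prev t n = t * lucasU t n - lucasU t (Suc n)"

lemma lucasU_prev_Suc: "lucasU_prev t (Suc n) = lucasU t n"
  by (cases n) (simp_all add: lucasU_prev_def)

definition madd :: "mat2 \<Rightarrow> mat2 \<Rightarrow> mat2" where
  "madd A B = Mat2 (ent11 A + ent11 B) (ent12 A + ent12 B) (ent21 A + ent21 B) (ent22 A + ent22 B)"

definition mscale :: "real \<Rightarrow> mat2 \<Rightarrow> mat2" where
  "mscale r A = Mat2 (r * ent11 A) (r * ent12 A) (r * ent21 A) (r * ent22 A)"

lemma madd_mscale_simps [simp]:
  "ent11 (madd A B) = ent11 A + ent11 B" "ent12 (madd A B) = ent12 A + ent12 B"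
  "ent21 (madd A B) = ent21 A + ent21 B" "ent22 (madd A B) = ent22 A + ent22 B"
  "ent11 (mscale r A) = r * ent11 A" "ent12 (mscale r A) = r * ent12 A"
  "ent21 (mscale r A) = r * ent21 A" "ent22 (mscale r A) = r * ent22 A"
  by (simp_all add: madd_def mscale_def)

lemma mmul_linear:
  "madd A B \<cdot>\<^sub>m C = madd (A \<cdot>\<^sub>m C) (B \<cdot>\<^sub>m C)" "C \<cdot>\<^sub>m madd A B = madd (C \<cdot>\<^sub>m A) (C \<cdot>\<^sub>m B)"
  "mscale r A \<cdot>\<^sub>m C = mscale r (A \<cdot>\<^sub>m C)" "C \<cdot>\<^sub>m mscale r A = mscale r (C \<cdot>\<^sub>m A)"
  by (rule mat2_eqI; simp add: algebra_simps)+

lemma mtrace_linear: "mtrace (madd A B) = mtrace A + mtrace B" "mtrace (mscale r A) = r * mtrace A"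
  by (simp_all add: mtrace_def algebra_simps)

lemma cayley_hamilton:
  assumes "mtrace X = t" "mdet X = 1"
  shows "X \<cdot>\<^sub>m X = madd (mscale t X) (mscale (- 1) mid)"
  using assms by (intro mat2_eqI) (auto simp: mtrace_def mdet_def algebra_simps power2_eq_square)

lemma mpow_lucas:
  assumes "mtrace X = t" "mdet X = 1"
  shows "mpow X n = madd (mscale (lucasU t n) X) (mscale (- lucasU_prev t n) mid)"
proof (induction n)
  case 0
  show ?case
    by (rule mat2_eqI) (simp_all add: lucasU_prev_def)
next
  case (Suc n)
  have "mpow X (Suc n) = madd (mscale (lucasU t n) (X \<cdot>\<^sub>m X)) (mscale (- lucasU_prev t n) X)"
    by (simp add: mpow_Suc Suc.IH mmul_linear)
  also have "\<dots> = madd (mscale (lucasU t (Suc n)) X) (mscale (- lucasU_prev t (Suc n)) mid)"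
    unfolding cayley_hamilton[OF assms] lucasU_prev_Suc
    by (rule mat2_eqI) (simp_all add: lucasU_prev_def algebra_simps)
  finally show ?case .
qed

lemma mtrace_powers_product:
  assumes "mtrace X = t" "mdet X = 1" "mtrace Y = t" "mdet Y = 1"
  shows "mtrace (mpow Y k \<cdot>\<^sub>m B \<cdot>\<^sub>m mpow X k \<cdot>\<^sub>m A) =
     (lucasU t k)\<^sup>2 * mtrace (Y \<cdot>\<^sub>m B \<cdot>\<^sub>m X \<cdot>\<^sub>m A)
     - lucasU t k * lucasU_prev t k * (mtrace (Y \<cdot>\<^sub>m B \<cdot>\<^sub>m A) + mtrace (B \<cdot>\<^sub>m X \<cdot>\<^sub>m A))
     + (lucasU_prev t k)\<^sup>2 * mtrace (B \<cdot>\<^sub>m A)"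
  unfolding mpow_lucas[OF assms(1,2)] mpow_lucas[OF assms(3,4)]
  by (simp add: mmul_linear mtrace_linear mmul_assoc power2_eq_square algebra_simps)

lemma lucas_roots:
  assumes "t > 2"
  obtains \<alpha> \<beta> :: real where "\<alpha> > 1" "\<alpha> * \<beta> = 1" "\<alpha> + \<beta> = t"
proof -
  define s where "s = sqrt (t\<^sup>2 - 4)"
  have "t\<^sup>2 - 4 = (t - 2) * (t + 2)"
    by (simp add: algebra_simps power2_eq_square)
  then have "t\<^sup>2 - 4 > 0"
    using assms by simp
  then have "s\<^sup>2 = t\<^sup>2 - 4" "s > 0"
    by (simp_all add: s_def)
  then show ?thesis
    using assms
    by (intro that[of "(t + s) / 2" "(t - s) / 2"]) (auto simp: field_simps power2_eq_square)
qed

lemma lucasU_closed: "\<alpha> * \<beta> = 1 \<Longrightarrow> \<alpha> + \<beta> = t \<Longrightarrow> lucasU t n * (\<alpha> - \<beta>) = \<alpha> ^ n - \<beta> ^ n"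
proof (induction t n rule: lucasU.induct)
  case (3 t n)
  have "lucasU t (Suc (Suc n)) * (\<alpha> - \<beta>)
      = t * (lucasU t (Suc n) * (\<alpha> - \<beta>)) - lucasU t n * (\<alpha> - \<beta>)"
    by (simp add: algebra_simps)
  also have "\<dots> = (\<alpha> + \<beta>) * (\<alpha> ^ Suc n - \<beta> ^ Suc n) - \<alpha> * \<beta> * (\<alpha> ^ n - \<beta> ^ n)"
    using 3 by simp
  also have "\<dots> = \<alpha> ^ Suc (Suc n) - \<beta> ^ Suc (Suc n)"
    by (simp add: algebra_simps)
  finally show ?case .
qed simp_all

lemma lucasV_closed: "\<alpha> * \<beta> = 1 \<Longrightarrow> \<alpha> + \<beta> = t \<Longrightarrow> lucasV t n = \<alpha> ^ n + \<beta> ^ n"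
proof (induction t n rule: lucasV.induct)
  case (3 t n)
  have "lucasV t (Suc (Suc n)) = (\<alpha> + \<beta>) * (\<alpha> ^ Suc n + \<beta> ^ Suc n) - \<alpha> * \<beta> * (\<alpha> ^ n + \<beta> ^ n)"
    using 3 by simp
  then show ?case
    by (simp add: algebra_simps)
qed simp_all

lemma lucasU_prev_closed:
  "\<alpha> * \<beta> = 1 \<Longrightarrow> \<alpha> + \<beta> = t \<Longrightarrow> lucasU_prev t n * (\<alpha> - \<beta>) = \<alpha> ^ n * \<beta> - \<beta> ^ n * \<alpha>"
proof -
  assume ab: "\<alpha> * \<beta> = 1" "\<alpha> + \<beta> = t"
  have "lucasU_prev t n * (\<alpha> - \<beta>) = t * (lucasU t n * (\<alpha> - \<beta>)) - lucasU t (Suc n) * (\<alpha> - \<beta>)"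
    by (simp add: lucasU_prev_def algebra_simps)
  also have "\<dots> = (\<alpha> + \<beta>) * (\<alpha> ^ n - \<beta> ^ n) - (\<alpha> ^ Suc n - \<beta> ^ Suc n)"
    using ab by (simp add: lucasU_closed)
  also have "\<dots> = \<alpha> ^ n * \<beta> - \<beta> ^ n * \<alpha>"
    by (simp add: algebra_simps)
  finally show ?thesis .
qed

lemma lucasV_powers_product:
  assumes "t > 2"
  shows "(lucasU t k)\<^sup>2 * lucasV t (m + 2) - lucasU t k * lucasU_prev t k * (2 * lucasV t (m + 1))
      + (lucasU_prev t k)\<^sup>2 * lucasV t m = lucasV t (2 * k + m)"
proof -
  obtain \<alpha> \<beta> where ab: "\<alpha> > 1" "\<alpha> * \<beta> = 1" "\<alpha> + \<beta> = t"
    using lucas_roots[OF assms] .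
  have "\<alpha> * \<alpha> > 1"
    using ab(1) less_1_mult by blast
  then have "\<alpha> \<noteq> \<beta>"
    using ab(2) by auto
  define z w P Q where "z = \<alpha> ^ k" "w = \<beta> ^ k" "P = \<alpha> ^ m" "Q = \<beta> ^ m"
  have U: "lucasU t k * (\<alpha> - \<beta>) = z - w" and U': "lucasU_prev t k * (\<alpha> - \<beta>) = z * \<beta> - w * \<alpha>"
    unfolding z_w_P_Q_def using lucasU_closed[OF ab(2,3)] lucasU_prev_closed[OF ab(2,3)] by simp_all
  have pow: "\<gamma> ^ (2 * k + m) = (\<gamma> ^ k)\<^sup>2 * \<gamma> ^ m" for \<gamma> :: real
  proof -
    have "\<gamma> ^ (2 * k + m) = \<gamma> ^ (k * 2) * \<gamma> ^ m"
      by (simp add: power_add mult.commute)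
    then show ?thesis
      by (simp only: power_mult)
  qed
  have V: "lucasV t (m + 2) = \<alpha>\<^sup>2 * P + \<beta>\<^sup>2 * Q" "lucasV t (m + 1) = \<alpha> * P + \<beta> * Q"
    "lucasV t m = P + Q" "lucasV t (2 * k + m) = z\<^sup>2 * P + w\<^sup>2 * Q"
    unfolding z_w_P_Q_def lucasV_closed[OF ab(2,3)] pow
    by (simp_all add: power_add power2_eq_square algebra_simps)
  have "((lucasU t k)\<^sup>2 * lucasV t (m + 2) - lucasU t k * lucasU_prev t k * (2 * lucasV t (m + 1))
      + (lucasU_prev t k)\<^sup>2 * lucasV t m) * (\<alpha> - \<beta>)\<^sup>2
    = (lucasU t k * (\<alpha> - \<beta>))\<^sup>2 * lucasV t (m + 2)
      - (lucasU t k * (\<alpha> - \<beta>)) * (lucasU_prev t k * (\<alpha> - \<beta>)) * (2 * lucasV t (m + 1))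
      + (lucasU_prev t k * (\<alpha> - \<beta>))\<^sup>2 * lucasV t m"
    by (simp add: algebra_simps power2_eq_square)
  also have "\<dots> = (z - w)\<^sup>2 * (\<alpha>\<^sup>2 * P + \<beta>\<^sup>2 * Q) - (z - w) * (z * \<beta> - w * \<alpha>) * (2 * (\<alpha> * P + \<beta> * Q))
      + (z * \<beta> - w * \<alpha>)\<^sup>2 * (P + Q)"
    unfolding U U' V ..
  also have "\<dots> = (z\<^sup>2 * P + w\<^sup>2 * Q) * (\<alpha> - \<beta>)\<^sup>2"
    by algebra
  finally show ?thesis
    unfolding V using \<open>\<alpha> \<noteq> \<beta>\<close> by simp
qed

lemma lucasV_square: "t > 2 \<Longrightarrow> (lucasV t n)\<^sup>2 - 4 = (t\<^sup>2 - 4) * (lucasU t n)\<^sup>2"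
proof -
  assume "t > 2"
  then obtain \<alpha> \<beta> where ab: "\<alpha> > 1" "\<alpha> * \<beta> = 1" "\<alpha> + \<beta> = t"
    using lucas_roots by blast
  have "\<alpha> ^ n * \<beta> ^ n = 1"
    using ab(2) by (metis power_mult_distrib power_one)
  then have "(lucasV t n)\<^sup>2 - 4 = (\<alpha> ^ n - \<beta> ^ n)\<^sup>2"
    unfolding lucasV_closed[OF ab(2,3)] by (simp add: power2_eq_square algebra_simps)
  also have "\<dots> = (lucasU t n)\<^sup>2 * ((\<alpha> + \<beta>)\<^sup>2 - 4 * (\<alpha> * \<beta>))"
    unfolding lucasU_closed[OF ab(2,3), symmetric] by (simp add: power2_eq_square algebra_simps)
  finally show ?thesis
    using ab by simp
qed

lemma lucasV_gt_2: "t > 2 \<Longrightarrow> n \<ge> 1 \<Longrightarrow> lucasV t n > 2"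
proof -
  assume "t > 2" "n \<ge> 1"
  then obtain \<alpha> \<beta> where ab: "\<alpha> > 1" "\<alpha> * \<beta> = 1" "\<alpha> + \<beta> = t"
    using lucas_roots by blast
  then have a: "\<alpha> ^ n > 1" "\<alpha> ^ n * \<beta> ^ n = 1"
    using \<open>n \<ge> 1\<close> by (simp_all add: one_less_power flip: power_mult_distrib)
  then have "\<alpha> ^ n * (\<alpha> ^ n + \<beta> ^ n - 2) = (\<alpha> ^ n - 1)\<^sup>2"
    by (simp add: power2_eq_square algebra_simps)
  moreover have "(\<alpha> ^ n - 1)\<^sup>2 > 0"
    using a by simp
  ultimately have "\<alpha> ^ n + \<beta> ^ n - 2 > 0"
    using a by (metis zero_less_mult_pos less_trans zero_less_one)
  then show ?thesis
    by (simp add: lucasV_closed[OF ab(2,3)])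
qed

lemma lucas_K18: "t \<in> K18 \<Longrightarrow> lucasU t n \<in> K18 \<and> lucasV t n \<in> K18"
  by (induction t n rule: lucasU.induct)
    (simp_all add: K18_diff K18_mult K18_of_nat[of 0, simplified] K18_of_nat[of 1, simplified]
      K18_of_nat[of 2, simplified])

section \<open>A criterion for special hyperbolic elements\<close>

lemma eigenvalue_discriminant:
  assumes "is_eigenvalue A \<mu>"
  shows "(2 * \<mu> - mtrace A)\<^sup>2 = (mtrace A)\<^sup>2 - 4 * mdet A"
proof -
  obtain a b c d where A: "A = Mat2 a b c d"
    by (cases A)
  obtain x y where xy: "(x, y) \<noteq> (0, 0)" "a * x + b * y = \<mu> * x" "c * x + d * y = \<mu> * y"
    using assms A by (auto simp: is_eigenvalue_def)
  let ?D = "(a - \<mu>) * (d - \<mu>) - b * c"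
  have "?D * x = (d - \<mu>) * ((a - \<mu>) * x + b * y) - b * (c * x + (d - \<mu>) * y)"
    "?D * y = (a - \<mu>) * (c * x + (d - \<mu>) * y) - c * ((a - \<mu>) * x + b * y)"
    by (simp_all add: algebra_simps)
  then have "?D * x = 0" "?D * y = 0"
    using xy(2,3) by (simp_all add: algebra_simps)
  then have "?D = 0"
    using xy(1) by auto
  then show ?thesis
    by (simp add: A mtrace_def mdet_def algebra_simps power2_eq_square)
qed

lemma fixpoint_discriminant:
  assumes "mobius A (Some r) = Some r"
  shows "(2 * ent21 A * r + ent22 A - ent11 A)\<^sup>2 = (mtrace A)\<^sup>2 - 4 * mdet A"
proof -
  obtain a b c d where A: "A = Mat2 a b c d"
    by (cases A)
  have "c * r + d \<noteq> 0" "(a * r + b) / (c * r + d) = r"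
    using assms A by (auto simp: mobius_def split: if_splits)
  then have "c * r * r + (d - a) * r = b"
    by (simp add: field_simps)
  then show ?thesis
    by (simp add: A mtrace_def mdet_def algebra_simps power2_eq_square
        flip: \<open>c * r * r + (d - a) * r = b\<close>)
qed

lemma K18_of_square: "x\<^sup>2 = e\<^sup>2 \<Longrightarrow> e \<in> K18 \<Longrightarrow> x \<in> K18"
  using K18_uminus by (auto simp: power2_eq_iff)

text \<open>Division by \<open>0\<close> gives \<open>0 \<in> \<lambda>K\<^sub>1\<^sub>8\<close>, so no side condition is needed.\<close>

lemma K18_divide_lamK: "x \<in> K18 \<Longrightarrow> c \<in> lamK \<Longrightarrow> x / c \<in> lamK"
proof -
  assume "x \<in> K18" "c \<in> lamK"
  then obtain c' where c': "c' \<in> K18" "c = lam * c'"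
    by (auto simp: lamK_iff)
  have "x / c = lam * (x / (lam\<^sup>2 * c'))"
    using lam_pos by (simp add: c'(2) power2_eq_square)
  moreover have "x / (lam\<^sup>2 * c') \<in> K18"
    using \<open>x \<in> K18\<close> c'(1) lam_sq_K18 by (simp add: K18_divide K18_mult)
  ultimately show ?thesis
    unfolding lamK_iff by blast
qed

definition graded :: "bool \<Rightarrow> mat2 \<Rightarrow> bool" where
  "graded e A \<longleftrightarrow>
    ent11 A \<in> Kpiece e \<and> ent22 A \<in> Kpiece e \<and> ent12 A \<in> Kpiece (\<not> e) \<and> ent21 A \<in> Kpiece (\<not> e)"

lemma graded_mmul: "graded e A \<Longrightarrow> graded e' B \<Longrightarrow> graded (e \<noteq> e') (A \<cdot>\<^sub>m B)"
  unfolding graded_def mmul_simps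
  by (intro conjI Kpiece_add) (auto dest: Kpiece_mult[of _ _ _ e'] Kpiece_mult[of _ _ _ "\<not> e'"])

lemma graded_Mseq: "graded (odd (length ns)) (Mseq ns)"
proof (induction ns)
  case Nil
  show ?case
    using Kpiece_0[of True] subfield_1[OF subfield_K18] by (simp add: graded_def Kpiece_def)
next
  case (Cons n ns)
  have S: "graded True Smat"
    using Kpiece_0[of True] subfield_1[OF subfield_K18] K18_uminus
    by (simp add: graded_def Kpiece_def Smat_def)
  have T: "graded False (zpow Tmat n)"
    using Kpiece_0[of False] subfield_1[OF subfield_K18] K18_of_int[of n]
    by (auto simp: graded_def Kpiece_def zpow_Tmat lamK_iff mult.commute)
  show ?case
    using graded_mmul[OF graded_mmul[OF Cons.IH S] T] by (simp add: Mseq_Cons)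
qed

lemma K18_two: "2 \<in> K18"
  using K18_of_nat[of 2] by simp

lemma special_hyperbolic_criterion:
  assumes G: "g \<in> G18" "graded False g" "mobius g None \<noteq> None"
    and tr: "mtrace g = lucasV \<tau> N" "N \<ge> 1" "\<tau> > 2" "\<tau> \<in> K18"
    and \<sigma>: "\<sigma> \<in> K18" "\<tau>\<^sup>2 - 4 = \<sigma>\<^sup>2"
  shows "special_hyperbolic g" "mobius g p = p \<Longrightarrow> \<exists>r. p = Some r \<and> r \<in> lamK"
proof -
  define e where "e = \<sigma> * lucasU \<tau> N"
  have eK: "e \<in> K18"
    unfolding e_def using \<sigma>(1) lucas_K18[OF tr(4)] by (simp add: K18_mult)
  have "(mtrace g)\<^sup>2 - 4 * mdet g = (\<tau>\<^sup>2 - 4) * (lucasU \<tau> N)\<^sup>2"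
    using G18_mdet[OF G(1)] lucasV_square[OF tr(3)] tr(1) by simp
  then have disc: "(mtrace g)\<^sup>2 - 4 * mdet g = e\<^sup>2"
    unfolding e_def \<sigma>(2) by (simp add: power_mult_distrib)
  have entries: "ent11 g \<in> K18" "ent22 g \<in> K18" "ent21 g \<in> lamK"
    using G(2) by (simp_all add: graded_def Kpiece_def)
  then have trK: "mtrace g \<in> K18"
    by (simp add: mtrace_def K18_add)
  have "hyperbolic g"
    using lucasV_gt_2[OF tr(3,2)] tr(1) by (simp add: hyperbolic_def)
  moreover have "\<mu> \<in> K18" if "is_eigenvalue g \<mu>" for \<mu>
  proof -
    have "2 * \<mu> - mtrace g \<in> K18"
      by (rule K18_of_square[OF _ eK]) (simp add: eigenvalue_discriminant[OF that] disc)
    from K18_divide[OF K18_add[OF this trK] K18_two] show ?thesis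
      by simp
  qed
  ultimately show "special_hyperbolic g"
    using G(1) by (simp add: special_hyperbolic_def)
  assume fixed: "mobius g p = p"
  then obtain r where r: "p = Some r"
    using G(3) by (cases p) auto
  have c0: "ent21 g \<noteq> 0"
    using G(3) by (auto simp: mobius_def)
  have "2 * ent21 g * r + ent22 g - ent11 g \<in> K18"
    by (rule K18_of_square[OF _ eK]) (use fixpoint_discriminant[of g r] fixed r disc in simp)
  from K18_divide[OF K18_diff[OF K18_add[OF this entries(1)] entries(2)] K18_two]
  have "(2 * ent21 g * r + ent22 g - ent11 g + ent11 g - ent22 g) / 2 / ent21 g \<in> lamK"
    using entries(3) by (rule K18_divide_lamK)
  then show "\<exists>r. p = Some r \<and> r \<in> lamK"
    using r c0 by simp
qed

section \<open>Families conjugate to admissible words\<close>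

definition pm_eq :: "mat2 \<Rightarrow> mat2 \<Rightarrow> bool" where
  "pm_eq A B \<longleftrightarrow> A = B \<or> A = mneg B"

lemma pm_eq_trans [trans]: "pm_eq A B \<Longrightarrow> pm_eq B C \<Longrightarrow> pm_eq A C"
  and pm_eq_mmul_right: "pm_eq A B \<Longrightarrow> pm_eq (A \<cdot>\<^sub>m C) (B \<cdot>\<^sub>m C)"
  and pm_eq_mmul_left: "pm_eq A B \<Longrightarrow> pm_eq (C \<cdot>\<^sub>m A) (C \<cdot>\<^sub>m B)"
  and pm_eq_mobius: "pm_eq A B \<Longrightarrow> mobius A p = mobius B p"
  by (auto simp: pm_eq_def)

lemma pm_eq_mpow:
  assumes "pm_eq (c \<cdot>\<^sub>m M) (Y \<cdot>\<^sub>m c)"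
  shows "pm_eq (c \<cdot>\<^sub>m mpow M k) (mpow Y k \<cdot>\<^sub>m c)"
proof (induction k)
  case 0
  show ?case
    by (simp add: pm_eq_def)
next
  case (Suc k)
  have "pm_eq (c \<cdot>\<^sub>m mpow M k \<cdot>\<^sub>m M) (mpow Y k \<cdot>\<^sub>m (c \<cdot>\<^sub>m M))"
    using pm_eq_mmul_right[OF Suc.IH] by (simp add: mmul_assoc)
  also have "pm_eq \<dots> (mpow Y k \<cdot>\<^sub>m (Y \<cdot>\<^sub>m c))"
    using assms by (rule pm_eq_mmul_left)
  finally show ?case
    by (simp add: mpow_Suc_right mmul_assoc)
qed

abbreviation family_word :: "nat list \<Rightarrow> nat list \<Rightarrow> nat list \<Rightarrow> nat list \<Rightarrow> nat \<Rightarrow> nat list" where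
  "family_word Y C X A k \<equiv> concat (replicate k Y) @ C @ concat (replicate k X) @ A"

lemma Mseq_family:
  "Mseq (a @ rep k P @ b @ rep k Q) = mpow (Mseq Q) k \<cdot>\<^sub>m Mseq b \<cdot>\<^sub>m mpow (Mseq P) k \<cdot>\<^sub>m Mseq a"
  by (simp add: Mseq_append Mseq_rep mmul_assoc)

lemma family_conjugate:
  assumes "pm_eq (c \<cdot>\<^sub>m Mseq Q) (word_mat Y \<cdot>\<^sub>m c)" "pm_eq (c \<cdot>\<^sub>m Mseq b) (word_mat C \<cdot>\<^sub>m d)"
    "pm_eq (d \<cdot>\<^sub>m Mseq P) (word_mat X \<cdot>\<^sub>m d)" "pm_eq (d \<cdot>\<^sub>m Mseq a) (word_mat A \<cdot>\<^sub>m c)"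
  shows "pm_eq (c \<cdot>\<^sub>m Mseq (a @ rep k P @ b @ rep k Q)) (word_mat (family_word Y C X A k) \<cdot>\<^sub>m c)"
proof -
  let ?Y = "mpow (word_mat Y) k" and ?X = "mpow (word_mat X) k"
  have "pm_eq (c \<cdot>\<^sub>m Mseq (a @ rep k P @ b @ rep k Q))
      (?Y \<cdot>\<^sub>m (c \<cdot>\<^sub>m Mseq b) \<cdot>\<^sub>m mpow (Mseq P) k \<cdot>\<^sub>m Mseq a)"
    using pm_eq_mmul_right[OF pm_eq_mpow[OF assms(1), of k], of "Mseq b \<cdot>\<^sub>m mpow (Mseq P) k \<cdot>\<^sub>m Mseq a"]
    by (simp add: Mseq_family mmul_assoc)
  also have "pm_eq \<dots> (?Y \<cdot>\<^sub>m word_mat C \<cdot>\<^sub>m (d \<cdot>\<^sub>m mpow (Mseq P) k) \<cdot>\<^sub>m Mseq a)"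
    using pm_eq_mmul_right[OF pm_eq_mmul_left[OF assms(2), of ?Y], of "mpow (Mseq P) k \<cdot>\<^sub>m Mseq a"]
    by (simp add: mmul_assoc)
  also have "pm_eq \<dots> (?Y \<cdot>\<^sub>m word_mat C \<cdot>\<^sub>m ?X \<cdot>\<^sub>m (d \<cdot>\<^sub>m Mseq a))"
    using pm_eq_mmul_right[OF pm_eq_mmul_left[OF pm_eq_mpow[OF assms(3), of k], of "?Y \<cdot>\<^sub>m word_mat C"],
        of "Mseq a"]
    by (simp add: mmul_assoc)
  also have "pm_eq \<dots> (word_mat (family_word Y C X A k) \<cdot>\<^sub>m c)"
    using pm_eq_mmul_left[OF assms(4), of "?Y \<cdot>\<^sub>m word_mat C \<cdot>\<^sub>m ?X"]
    by (simp add: word_mat_append word_mat_replicate mmul_assoc)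
  finally show ?thesis .
qed

lemma family_trace:
  assumes P: "mtrace (Mseq P) = \<tau>" and Q: "mtrace (Mseq Q) = \<tau>" and "\<tau> > 2"
    and "mtrace (Mseq Q \<cdot>\<^sub>m Mseq b \<cdot>\<^sub>m Mseq P \<cdot>\<^sub>m Mseq a) = lucasV \<tau> (m + 2)"
    and "mtrace (Mseq Q \<cdot>\<^sub>m Mseq b \<cdot>\<^sub>m Mseq a) + mtrace (Mseq b \<cdot>\<^sub>m Mseq P \<cdot>\<^sub>m Mseq a)
      = 2 * lucasV \<tau> (m + 1)"
    and "mtrace (Mseq b \<cdot>\<^sub>m Mseq a) = lucasV \<tau> m"
  shows "mtrace (Mseq (a @ rep k P @ b @ rep k Q)) = lucasV \<tau> (2 * k + m)"
  unfolding Mseq_family mtrace_powers_product[OF P G18_mdet[OF G18_Mseq] Q G18_mdet[OF G18_Mseq]]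
    lucasV_powers_product[OF \<open>\<tau> > 2\<close>, symmetric]
  using assms(4-6) by (simp add: mmul_assoc)

lemma conjugate_fixpoint:
  assumes "c \<in> G18" "M \<in> G18" "pm_eq (c \<cdot>\<^sub>m M) (W \<cdot>\<^sub>m c)"
  shows "mobius c (mobius M p) = mobius W (mobius c p)"
  using assms pm_eq_mobius[OF assms(3)] by (simp add: mobius_mmul G18_mdet)

lemma conjugate_fixpoint_coded:
  assumes "c \<in> G18" "M \<in> G18" "pm_eq (c \<cdot>\<^sub>m M) (word_mat ws \<cdot>\<^sub>m c)" "admissible ws"
    and "mobius M p = p"
  shows "coded p"
proof -
  have "coded (mobius c p)"
    using conjugate_fixpoint[OF assms(1-3), of p] assms(4,5) admissible_fixpoint_coded by simp
  then show ?thesis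
    using coded_G18[OF G18_minv[OF assms(1)]] mobius_minv_cancel(1)[OF G18_mdet[OF assms(1)]] by metis
qed

lemma infinite_fixpoint_orbits:
  fixes W :: "nat \<Rightarrow> nat list"
  assumes c: "c \<in> G18" and M: "\<And>k. M k \<in> G18"
    and conj: "\<And>k. pm_eq (c \<cdot>\<^sub>m M k) (word_mat (W k) \<cdot>\<^sub>m c)" and adm: "\<And>k. admissible (W k)"
    and density: "\<And>k l. length (W l) * count_list (W k) 1 = length (W k) * count_list (W l) 1 \<Longrightarrow> k = l"
  shows "infinite {orbit18 p | p k. mobius (M k) p = p}"
proof -
  have "\<forall>k. \<exists>y. y > 0 \<and> mobius (word_mat (W k)) (Some y) = Some y"
    using admissible_fixpoint_exists[OF adm] by blast
  then obtain x where x: "\<And>k. x k > 0" "\<And>k. mobius (word_mat (W k)) (Some (x k)) = Some (x k)"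
    by metis
  define p where "p k = mobius (minv c) (Some (x k))" for k
  have c_p: "mobius c (p k) = Some (x k)" for k
    unfolding p_def using mobius_minv_cancel(2)[OF G18_mdet[OF c]] .
  have "mobius c (mobius (M k) (p k)) = mobius c (p k)" for k
    using conjugate_fixpoint[OF c M conj] c_p x(2) by simp
  then have fixed: "mobius (M k) (p k) = p k" for k
    using arg_cong[where f = "mobius (minv c)"] mobius_minv_cancel(1)[OF G18_mdet[OF c]] by metis
  have orbit: "orbit18 (p k) = orbit18 (Some (x k))" for k
    using orbit18_mobius[OF G18_minv[OF c]] by (simp add: p_def)
  have "inj (\<lambda>k. orbit18 (p k))"
  proof (rule injI)
    fix k l
    assume "orbit18 (p k) = orbit18 (p l)"
    then have "length (W l) * count_list (W k) 1 = length (W k) * count_list (W l) 1"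
      using same_orbit_density_eq[OF adm x(1,2) adm x(1,2)] orbit by simp
    then show "k = l"
      by (rule density)
  qed
  then have "infinite (range (\<lambda>k. orbit18 (p k)))"
    using finite_imageD[of "\<lambda>k. orbit18 (p k)" UNIV] by auto
  moreover have "range (\<lambda>k. orbit18 (p k)) \<subseteq> {orbit18 p | p k. mobius (M k) p = p}"
    using fixed by blast
  ultimately show ?thesis
    using infinite_super by blast
qed

lemma affine_ratio_inj:
  fixes k l p q r s :: nat
  assumes "(l * p + q) * (k * r + s) = (k * p + q) * (l * r + s)" "r * q \<noteq> s * p"
  shows "k = l"
proof -
  have "int ((l * p + q) * (k * r + s)) - int ((k * p + q) * (l * r + s))
      = (int l - int k) * (int p * int s - int q * int r)"
    by (simp add: algebra_simps)
  moreover have "int p * int s - int q * int r \<noteq> 0"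
    using assms(2) by (metis eq_iff_diff_eq_0 mult.commute of_nat_eq_iff of_nat_mult)
  ultimately show ?thesis
    using assms(1) by simp
qed

definition special_family :: "(nat \<Rightarrow> int list) \<Rightarrow> bool" where
  "special_family w \<longleftrightarrow> (\<forall>k. special_hyperbolic (Mseq (w k)))
    \<and> (\<forall>k p. mobius (Mseq (w k)) p = p \<longrightarrow> (\<exists>r. p = Some r \<and> r \<in> lamK))
    \<and> infinite {orbit18 p | p k. mobius (Mseq (w k)) p = p}"

lemma special_familyI:
  fixes a P b Q :: "int list" and X Y C A :: "nat list"
  assumes parity: "even (length a + length b)" "even (length P + length Q)"
    and G: "c \<in> G18" "d \<in> G18"
    and conj: "pm_eq (c \<cdot>\<^sub>m Mseq Q) (word_mat Y \<cdot>\<^sub>m c)" "pm_eq (c \<cdot>\<^sub>m Mseq b) (word_mat C \<cdot>\<^sub>m d)"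
      "pm_eq (d \<cdot>\<^sub>m Mseq P) (word_mat X \<cdot>\<^sub>m d)" "pm_eq (d \<cdot>\<^sub>m Mseq a) (word_mat A \<cdot>\<^sub>m c)"
    and traces: "mtrace (Mseq P) = \<tau>" "mtrace (Mseq Q) = \<tau>"
      "mtrace (Mseq Q \<cdot>\<^sub>m Mseq b \<cdot>\<^sub>m Mseq P \<cdot>\<^sub>m Mseq a) = lucasV \<tau> (m + 2)"
      "mtrace (Mseq Q \<cdot>\<^sub>m Mseq b \<cdot>\<^sub>m Mseq a) + mtrace (Mseq b \<cdot>\<^sub>m Mseq P \<cdot>\<^sub>m Mseq a)
        = 2 * lucasV \<tau> (m + 1)"
      "mtrace (Mseq b \<cdot>\<^sub>m Mseq a) = lucasV \<tau> m" "m \<ge> 1"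
    and \<tau>: "\<tau> > 2" "\<tau> \<in> K18" "\<sigma> \<in> K18" "\<tau>\<^sup>2 - 4 = \<sigma>\<^sup>2"
    and words: "set (X @ Y @ C @ A) \<subseteq> {1, 2, 16, 17}" "2 \<in> set (C @ A) \<or> 16 \<in> set (C @ A)"
      "count_list (X @ Y) 1 * length (C @ A) \<noteq> count_list (C @ A) 1 * length (X @ Y)"
  shows "special_family (\<lambda>k. a @ rep k P @ b @ rep k Q)"
proof -
  let ?M = "\<lambda>k. Mseq (a @ rep k P @ b @ rep k Q)" and ?W = "family_word Y C X A"
  have conj_k: "pm_eq (c \<cdot>\<^sub>m ?M k) (word_mat (?W k) \<cdot>\<^sub>m c)" for k
    using family_conjugate[OF conj] .
  have adm: "admissible (?W k)" for k
    using words(1,2) by (auto simp: admissible_def)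
  have "length (?W l) * count_list (?W k) 1 = length (?W k) * count_list (?W l) 1 \<Longrightarrow> k = l" for k l
    by (rule affine_ratio_inj[where p = "length (X @ Y)" and q = "length (C @ A)"
          and r = "count_list (X @ Y) 1" and s = "count_list (C @ A) 1"])
      (use words(3) in \<open>simp_all add: length_concat sum_list_replicate count_list_concat_replicate
          algebra_simps\<close>)
  then have orbits: "infinite {orbit18 p | p k. mobius (?M k) p = p}"
    by (rule infinite_fixpoint_orbits[where M = ?M and W = ?W, OF G(1) G18_Mseq conj_k adm])
  have "even (length (a @ rep k P @ b @ rep k Q))" for k
    using parity by (simp add: rep_def length_concat sum_list_replicate algebra_simps)
  then have graded: "graded False (?M k)" for k
    using graded_Mseq[of "a @ rep k P @ b @ rep k Q"] by simp
  have "mobius (?M k) None \<noteq> None" for k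
  proof
    assume "mobius (?M k) None = None"
    then have "coded None"
      by (rule conjugate_fixpoint_coded[OF G(1) G18_Mseq conj_k[of k] adm[of k]])
    then show False
      by (simp add: not_coded_None)
  qed
  note criterion = special_hyperbolic_criterion[OF G18_Mseq graded this
      family_trace[OF traces(1,2) \<tau>(1) traces(3-5)] _ \<tau>]
  show ?thesis
    unfolding special_family_def using criterion traces(6) orbits by simp
qed

section \<open>Exact arithmetic in \<open>\<int>[\<lambda>]\<close>\<close>

lemma lam_minpoly: "lam ^ 6 = 6 * lam ^ 4 - 9 * lam\<^sup>2 + 3"
proof -
  have "cos (3 * (pi / 18)) = sqrt 3 / 2"
    using cos_30 by simp
  then have "lam ^ 3 - 3 * lam = sqrt 3"
    unfolding lam_def cos_treble_cos by (simp add: power3_eq_cube algebra_simps)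
  then have "(lam ^ 3 - 3 * lam)\<^sup>2 = 3"
    by simp
  then show ?thesis
    by (simp add: power2_eq_square algebra_simps power_numeral_reduce)
qed

text \<open>\<open>ZL a\<^sub>0 \<dots> a\<^sub>5\<close> stands for \<open>a\<^sub>0 + a\<^sub>1 \<lambda> + \<dots> + a\<^sub>5 \<lambda>\<^sup>5\<close>; multiplication by \<open>\<lambda>\<close>
  reduces \<open>\<lambda>\<^sup>6\<close> by the minimal polynomial of \<open>\<lambda>\<close>.\<close>

datatype zlam = ZL int int int int int int

fun zval :: "zlam \<Rightarrow> real" where
  "zval (ZL a0 a1 a2 a3 a4 a5) = of_int a0 + lam * (of_int a1 + lam * (of_int a2 + lam * (of_int a3
     + lam * (of_int a4 + lam * of_int a5))))"

fun zadd :: "zlam \<Rightarrow> zlam \<Rightarrow> zlam" where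
  "zadd (ZL a0 a1 a2 a3 a4 a5) (ZL b0 b1 b2 b3 b4 b5)
    = ZL (a0 + b0) (a1 + b1) (a2 + b2) (a3 + b3) (a4 + b4) (a5 + b5)"

fun zneg :: "zlam \<Rightarrow> zlam" where
  "zneg (ZL a0 a1 a2 a3 a4 a5) = ZL (- a0) (- a1) (- a2) (- a3) (- a4) (- a5)"

fun zscale :: "int \<Rightarrow> zlam \<Rightarrow> zlam" where
  "zscale c (ZL a0 a1 a2 a3 a4 a5) = ZL (c * a0) (c * a1) (c * a2) (c * a3) (c * a4) (c * a5)"

fun ztimes_lam :: "zlam \<Rightarrow> zlam" where
  "ztimes_lam (ZL a0 a1 a2 a3 a4 a5) = ZL (3 * a5) a0 (a1 - 9 * a5) a2 (a3 + 6 * a5) a4"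

fun zmult :: "zlam \<Rightarrow> zlam \<Rightarrow> zlam" where
  "zmult (ZL a0 a1 a2 a3 a4 a5) q = zadd (zscale a0 q) (ztimes_lam (zadd (zscale a1 q)
     (ztimes_lam (zadd (zscale a2 q) (ztimes_lam (zadd (zscale a3 q)
     (ztimes_lam (zadd (zscale a4 q) (ztimes_lam (zscale a5 q))))))))))"

lemma zval_zadd [simp]: "zval (zadd p q) = zval p + zval q"
  by (cases p; cases q) (simp add: algebra_simps)

lemma zval_zneg [simp]: "zval (zneg p) = - zval p"
  by (cases p) (simp add: algebra_simps)

lemma zval_zscale [simp]: "zval (zscale c p) = of_int c * zval p"
  by (cases p) (simp add: algebra_simps)

lemma zval_ztimes_lam [simp]: "zval (ztimes_lam p) = lam * zval p"
proof (cases p)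
  case (ZL a0 a1 a2 a3 a4 a5)
  have "zval (ztimes_lam p) - lam * zval p = of_int a5 * (3 - 9 * lam\<^sup>2 + 6 * lam ^ 4 - lam ^ 6)"
    by (simp add: ZL algebra_simps power_numeral_reduce power2_eq_square)
  then show ?thesis
    by (simp add: lam_minpoly)
qed

lemma zval_zmult [simp]: "zval (zmult p q) = zval p * zval q"
  by (cases p) (simp add: algebra_simps)

definition zconst :: "int \<Rightarrow> zlam" where
  "zconst n = ZL n 0 0 0 0 0"

lemma zval_zconst [simp]: "zval (zconst n) = of_int n"
  by (simp add: zconst_def)

datatype zmat = ZM zlam zlam zlam zlam

fun zmat_val :: "zmat \<Rightarrow> mat2" where
  "zmat_val (ZM a b c d) = Mat2 (zval a) (zval b) (zval c) (zval d)"

fun zmat_mult :: "zmat \<Rightarrow> zmat \<Rightarrow> zmat" where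
  "zmat_mult (ZM a b c d) (ZM e f g h)
    = ZM (zadd (zmult a e) (zmult b g)) (zadd (zmult a f) (zmult b h))
      (zadd (zmult c e) (zmult d g)) (zadd (zmult c f) (zmult d h))"

fun zmat_neg :: "zmat \<Rightarrow> zmat" where
  "zmat_neg (ZM a b c d) = ZM (zneg a) (zneg b) (zneg c) (zneg d)"

fun zmat_trace :: "zmat \<Rightarrow> zlam" where
  "zmat_trace (ZM a b c d) = zadd a d"

lemma zmat_val_mult: "zmat_val (zmat_mult A B) = zmat_val A \<cdot>\<^sub>m zmat_val B"
  by (cases A; cases B) (simp add: mmul_def)

lemma zmat_val_neg: "zmat_val (zmat_neg A) = mneg (zmat_val A)"
  by (cases A) (simp add: mneg_def)

lemma zval_zmat_trace: "zval (zmat_trace A) = mtrace (zmat_val A)"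
  by (cases A) (simp add: mtrace_def)

definition zS :: zmat where
  "zS = ZM (zconst 0) (zconst (- 1)) (zconst 1) (zconst 0)"

definition zT :: "int \<Rightarrow> zmat" where
  "zT n = ZM (zconst 1) (ZL 0 n 0 0 0 0) (zconst 0) (zconst 1)"

definition zI :: zmat where
  "zI = ZM (zconst 1) (zconst 0) (zconst 0) (zconst 1)"

lemma zmat_val_generators: "zmat_val zS = Smat" "zmat_val (zT n) = zpow Tmat n" "zmat_val zI = mid"
  by (simp_all add: zS_def zT_def zI_def Smat_def zpow_Tmat mid_def mult.commute)

definition zMseq :: "int list \<Rightarrow> zmat" where
  "zMseq ns = foldl (\<lambda>A n. zmat_mult (zmat_mult zS (zT n)) A) zI ns"

lemma Mseq_zMseq: "Mseq ns = zmat_val (zMseq ns)"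
proof -
  have "zmat_val (foldl (\<lambda>A n. zmat_mult (zmat_mult zS (zT n)) A) B ns) = Mseq ns \<cdot>\<^sub>m zmat_val B" for B
    by (induction ns arbitrary: B)
      (simp_all add: Mseq_Cons zmat_val_mult zmat_val_generators mmul_assoc)
  then show ?thesis
    by (simp add: zMseq_def zmat_val_generators)
qed

definition zdigit :: "nat \<Rightarrow> zmat" where
  "zdigit j =
    (if j = 1 then ZM (zconst 1) (ZL 0 1 0 0 0 0) (zconst 0) (zconst 1)
     else if j = 2 then ZM (ZL 0 1 0 0 0 0) (ZL (- 1) 0 1 0 0 0) (zconst 1) (ZL 0 1 0 0 0 0)
     else if j = 16 then ZM (ZL 0 1 0 0 0 0) (zconst 1) (ZL (- 1) 0 1 0 0 0) (ZL 0 1 0 0 0 0)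
     else ZM (zconst 1) (zconst 0) (ZL 0 1 0 0 0 0) (zconst 1))"

definition zword :: "nat list \<Rightarrow> zmat" where
  "zword ws = foldr (\<lambda>j M. zmat_mult (zdigit j) M) ws zI"

lemma word_mat_zword: "set ws \<subseteq> {1, 2, 16, 17} \<Longrightarrow> word_mat ws = zmat_val (zword ws)"
proof (induction ws)
  case (Cons j ws)
  then have "digit_mat j = zmat_val (zdigit j)"
    by (auto simp: zdigit_def digit_mat_values digit_mat_values(1)[simplified] power2_eq_square)
  with Cons show ?case
    by (simp add: zword_def word_mat_Cons zmat_val_mult)
qed (simp add: zword_def zmat_val_generators)

fun zlucasV :: "zlam \<Rightarrow> nat \<Rightarrow> zlam" where
  "zlucasV t 0 = zconst 2"
| "zlucasV t (Suc 0) = t"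
| "zlucasV t (Suc (Suc n)) = zadd (zmult t (zlucasV t (Suc n))) (zneg (zlucasV t n))"

lemma zval_zlucasV: "zval (zlucasV t n) = lucasV (zval t) n"
  by (induction t n rule: zlucasV.induct) simp_all

lemma zlucasV_tau:
  "zlucasV (ZL 2 0 0 0 16 0) 1 = ZL 2 0 0 0 16 0"
  "zlucasV (ZL 2 0 0 0 16 0) 2 = ZL 4610 0 (-13056) 0 6976 0"
  "zlucasV (ZL 2 0 0 0 16 0) 3 = ZL 1391618 0 (-3838464) 0 1847952 0"
  "zlucasV (ZL 2 0 0 0 16 0) 4 = ZL 350742530 0 (-962853888) 0 455777536 0"
  by (simp_all add: numeral_eq_Suc zconst_def)

lemma zval_even_K18: "zval (ZL a 0 c 0 e 0) \<in> K18"
proof -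
  have "zval (ZL a 0 c 0 e 0) = of_int a + of_int c * lam\<^sup>2 + of_int e * (lam\<^sup>2 * lam\<^sup>2)"
    by (simp add: algebra_simps power2_eq_square)
  also have "\<dots> \<in> K18"
    by (intro K18_add K18_mult K18_of_int lam_sq_K18)
  finally show ?thesis .
qed

lemma tau_sigma:
  defines "\<tau> \<equiv> zval (ZL 2 0 0 0 16 0)" and "\<sigma> \<equiv> zval (ZL 48 0 (-136) 0 48 0)"
  shows "\<tau> > 2" "\<tau> \<in> K18" "\<sigma> \<in> K18" "\<tau>\<^sup>2 - 4 = \<sigma>\<^sup>2"
proof -
  have "\<tau> = 2 + 16 * lam ^ 4"
    by (simp add: \<tau>_def algebra_simps power_numeral_reduce)
  then show "\<tau> > 2"
    using lam_pos by simp
  show "\<tau> \<in> K18" "\<sigma> \<in> K18"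
    unfolding \<tau>_def \<sigma>_def by (rule zval_even_K18)+
  have "zadd (zmult (ZL 2 0 0 0 16 0) (ZL 2 0 0 0 16 0)) (zconst (- 4))
      = zmult (ZL 48 0 (-136) 0 48 0) (ZL 48 0 (-136) 0 48 0)"
    by (simp add: zconst_def)
  then have "zval (zadd (zmult (ZL 2 0 0 0 16 0) (ZL 2 0 0 0 16 0)) (zconst (- 4)))
      = zval (zmult (ZL 48 0 (-136) 0 48 0) (ZL 48 0 (-136) 0 48 0))"
    by (rule arg_cong)
  then show "\<tau>\<^sup>2 - 4 = \<sigma>\<^sup>2"
    unfolding zval_zadd zval_zmult zval_zconst \<tau>_def \<sigma>_def by (simp add: power2_eq_square)
qed

definition zpm_eq :: "zmat \<Rightarrow> zmat \<Rightarrow> bool" where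
  "zpm_eq X Y \<longleftrightarrow> X = Y \<or> X = zmat_neg Y"

lemma pm_eq_zpm_eq: "zpm_eq X Y \<Longrightarrow> pm_eq (zmat_val X) (zmat_val Y)"
  by (auto simp: zpm_eq_def pm_eq_def zmat_val_neg)

lemma special_family_cert:
  fixes a P b Q c d :: "int list" and X Y C A :: "nat list"
  defines "\<tau> \<equiv> ZL 2 0 0 0 16 0"
  assumes parity: "even (length a + length b)" "even (length P + length Q)"
    and conj: "zpm_eq (zmat_mult (zMseq c) (zMseq Q)) (zmat_mult (zword Y) (zMseq c))"
      "zpm_eq (zmat_mult (zMseq c) (zMseq b)) (zmat_mult (zword C) (zMseq d))"
      "zpm_eq (zmat_mult (zMseq d) (zMseq P)) (zmat_mult (zword X) (zMseq d))"
      "zpm_eq (zmat_mult (zMseq d) (zMseq a)) (zmat_mult (zword A) (zMseq c))"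
    and traces: "zmat_trace (zMseq P) = \<tau>" "zmat_trace (zMseq Q) = \<tau>"
      "zmat_trace (zmat_mult (zmat_mult (zmat_mult (zMseq Q) (zMseq b)) (zMseq P)) (zMseq a))
        = zlucasV \<tau> (m + 2)"
      "zadd (zmat_trace (zmat_mult (zmat_mult (zMseq Q) (zMseq b)) (zMseq a)))
          (zmat_trace (zmat_mult (zmat_mult (zMseq b) (zMseq P)) (zMseq a)))
        = zscale 2 (zlucasV \<tau> (m + 1))"
      "zmat_trace (zmat_mult (zMseq b) (zMseq a)) = zlucasV \<tau> m" "m \<ge> 1"
    and words: "set (X @ Y @ C @ A) \<subseteq> {1, 2, 16, 17}" "2 \<in> set (C @ A) \<or> 16 \<in> set (C @ A)"
      "count_list (X @ Y) 1 * length (C @ A) \<noteq> count_list (C @ A) 1 * length (X @ Y)"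
  shows "special_family (\<lambda>k. a @ rep k P @ b @ rep k Q)"
proof -
  have digits: "word_mat ws = zmat_val (zword ws)" if "ws \<in> {X, Y, C, A}" for ws
    using words(1) that by (intro word_mat_zword) auto
  show ?thesis
  proof (rule special_familyI[OF parity G18_Mseq G18_Mseq _ _ _ _ _ _ _ _ _ traces(6)
        tau_sigma[folded \<tau>_def] words])
    show "pm_eq (Mseq c \<cdot>\<^sub>m Mseq Q) (word_mat Y \<cdot>\<^sub>m Mseq c)"
      "pm_eq (Mseq c \<cdot>\<^sub>m Mseq b) (word_mat C \<cdot>\<^sub>m Mseq d)"
      "pm_eq (Mseq d \<cdot>\<^sub>m Mseq P) (word_mat X \<cdot>\<^sub>m Mseq d)"
      "pm_eq (Mseq d \<cdot>\<^sub>m Mseq a) (word_mat A \<cdot>\<^sub>m Mseq c)"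
      using pm_eq_zpm_eq[OF conj(1)] pm_eq_zpm_eq[OF conj(2)] pm_eq_zpm_eq[OF conj(3)]
        pm_eq_zpm_eq[OF conj(4)]
      by (simp_all add: zmat_val_mult Mseq_zMseq digits)
    show "mtrace (Mseq P) = zval \<tau>" "mtrace (Mseq Q) = zval \<tau>"
      "mtrace (Mseq Q \<cdot>\<^sub>m Mseq b \<cdot>\<^sub>m Mseq P \<cdot>\<^sub>m Mseq a) = lucasV (zval \<tau>) (m + 2)"
      "mtrace (Mseq Q \<cdot>\<^sub>m Mseq b \<cdot>\<^sub>m Mseq a) + mtrace (Mseq b \<cdot>\<^sub>m Mseq P \<cdot>\<^sub>m Mseq a)
        = 2 * lucasV (zval \<tau>) (m + 1)"
      "mtrace (Mseq b \<cdot>\<^sub>m Mseq a) = lucasV (zval \<tau>) m"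
      using traces(1-5)[THEN arg_cong[where f = zval]]
      by (simp_all add: zval_zmat_trace zmat_val_mult Mseq_zMseq zval_zlucasV)
  qed
qed

text \<open>The conjugators below are \<open>I = M()\<close>, \<open>S = M(0)\<close>, \<open>U S = M(0, 1)\<close>, \<open>S U = M(1, 0)\<close>
  and \<open>U\<^sup>1\<^sup>7 = -M(0, -1, 0)\<close>.\<close>

lemmas zmat_defs = zMseq_def zword_def zdigit_def zS_def zT_def zI_def zconst_def zpm_eq_def zlucasV_tau

lemma special_family_1:
  "special_family (\<lambda>k. [2] @ rep k [-4,-1,4,1] @ [-2,-2,2] @ rep k [1,-4,-1,4])"
  by (rule special_family_cert[where c = "[0, -1, 0]" and d = "[0]" and m = 1
        and X = "[2,1,1,1,16,17,17,17]" and Y = "[1,1,1,16,17,17,17,2]"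
        and C = "[1,17,16,17]" and A = "[1,2]"])
    (simp_all add: zmat_defs)

lemma special_family_2:
  "special_family (\<lambda>k. [4] @ rep k [2,-2,-2,2] @ [1,-4,-1] @ rep k [2,2,-2,-2])"
  by (rule special_family_cert[where c = "[]" and d = "[0, -1, 0]" and m = 1
        and X = "[1,17,16,17,1,2]" and Y = "[17,16,17,1,2,1]"
        and C = "[16,17,17,17,2]" and A = "[1,1,1]"])
    (simp_all add: zmat_defs)

lemma special_family_3:
  "special_family (\<lambda>k. [-4] @ rep k [-1,8,1,-2] @ [-2,1,2] @ rep k [-2,-1,8,1])"
  by (rule special_family_cert[where c = "[0]" and d = "[0, 1]" and m = 1
        and X = "[17,2,1,1,1,1,1,1,1,16]" and Y = "[2,1,1,1,1,1,1,1,16,17]"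
        and C = "[1,2,17,16]" and A = "[17,17,17]"])
    (simp_all add: zmat_defs)

lemma special_family_4:
  "special_family (\<lambda>k. [-1] @ rep k [-4,2,1,-2] @ [-2,1,8] @ rep k [1,-1,-1,16])"
  by (rule special_family_cert[where c = "[0, -1, 0]" and d = "[0, 1]" and m = 1
        and X = "[17,2,1,17,17,17,16]" and Y = "[1,1,1,1,1,1,1,1,1,1,1,1,1,1,1,16,2]"
        and C = "[1,1,1,1,1,1,2,17,16]" and A = "[1]"])
    (simp_all add: zmat_defs)

lemma special_family_5:
  "special_family (\<lambda>k. [16] @ rep k [1,-2,-1,8] @ [-1,-1,1] @ rep k [8,1,-2,-1])"
  by (rule special_family_cert[where c = "[1, 0]" and d = "[0, -1, 0]" and m = 1
        and X = "[1,1,1,1,1,1,1,16,17,2]" and Y = "[1,16,17,2,1,1,1,1,1,1]"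
        and C = "[2,16,1]" and A = "[1,1,1,1,1,1,1,1,1,1,1,1,1,1]"])
    (simp_all add: zmat_defs)

lemma special_family_6:
  "special_family (\<lambda>k. [4] @ rep k [2,-2,-2,2] @ [2,-2,-1,4,1,-2,-2] @ rep k [2,2,-2,-2])"
  by (rule special_family_cert[where c = "[]" and d = "[0, -1, 0]" and m = 2
        and X = "[1,17,16,17,1,2]" and Y = "[17,16,17,1,2,1]"
        and C = "[17,16,17,2,1,1,1,16,17,1,2]" and A = "[1,1,1]"])
    (simp_all add: zmat_defs)

lemma special_family_7:
  "special_family (\<lambda>k. [4] @ rep k [1,-2,-4,2] @ [1,-2,-2,4,2,-2,-1] @ rep k [2,4,-2,-1])"
  by (rule special_family_cert[where c = "[]" and d = "[0, -1, 0]" and m = 2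
        and X = "[1,17,17,17,16,17,2]" and Y = "[16,17,1,1,1,2,1]"
        and C = "[16,17,1,2,1,1,1,17,16,17,2]" and A = "[1,1,1]"])
    (simp_all add: zmat_defs)

lemma special_family_8:
  "special_family (\<lambda>k. [2] @ rep k [-4,-1,4,1] @ [-4,-1,2,2,-2,-1,4] @ rep k [1,-4,-1,4])"
  by (rule special_family_cert[where c = "[0, -1, 0]" and d = "[0]" and m = 2
        and X = "[2,1,1,1,16,17,17,17]" and Y = "[1,1,1,16,17,17,17,2]"
        and C = "[1,1,1,16,17,1,2,1,16,17,17,17]" and A = "[1,2]"])
    (simp_all add: zmat_defs)

lemma special_family_9:
  "special_family (\<lambda>k. [2] @ rep k [-2,-1,8,1] @ [-2,-1,4,2,-4,-1,2] @ rep k [1,-8,-1,2])"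
  by (rule special_family_cert[where c = "[0, -1, 0]" and d = "[0]" and m = 2
        and X = "[2,1,1,1,1,1,1,1,16,17]" and Y = "[1,16,17,17,17,17,17,17,17,2]"
        and C = "[1,16,17,17,17,1,2,1,1,1,16,17]" and A = "[1,2]"])
    (simp_all add: zmat_defs)

lemma special_family_10:
  "special_family (\<lambda>k. [-4] @ rep k [-1,8,1,-2] @ [-1,8,-1,-1,1,8,1] @ rep k [-2,-1,8,1])"
  by (rule special_family_cert[where c = "[0]" and d = "[0, 1]" and m = 2
        and X = "[17,2,1,1,1,1,1,1,1,16]" and Y = "[2,1,1,1,1,1,1,1,16,17]"
        and C = "[2,1,1,1,1,1,1,2,16,1,1,1,1,1,1,1,1,16]" and A = "[17,17,17]"])
    (simp_all add: zmat_defs)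

lemma special_family_11:
  "special_family (\<lambda>k. [2] @ rep k [-8,-1,2,1] @ [-8,-1,1,2,-1,-1,8] @ rep k [1,-2,-1,8])"
  by (rule special_family_cert[where c = "[0, -1, 0]" and d = "[0]" and m = 2
        and X = "[2,1,16,17,17,17,17,17,17,17]" and Y = "[1,1,1,1,1,1,1,16,17,2]"
        and C = "[1,1,1,1,1,1,1,16,1,2,16,17,17,17,17,17,17,17]" and A = "[1,2]"])
    (simp_all add: zmat_defs)

lemma special_family_12:
  "special_family (\<lambda>k. [2] @ rep k [-1,-1,16,1] @ [-1,-1,8,2,-8,-1,1] @ rep k [1,-16,-1,1])"
  by (rule special_family_cert[where c = "[0, -1, 0]" and d = "[0]" and m = 2
        and X = "[2,1,1,1,1,1,1,1,1,1,1,1,1,1,1,1,16]"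
        and Y = "[16,17,17,17,17,17,17,17,17,17,17,17,17,17,17,17,2]"
        and C = "[16,17,17,17,17,17,17,17,1,2,1,1,1,1,1,1,1,16]" and A = "[1,2]"])
    (simp_all add: zmat_defs)

lemma special_family_13:
  "special_family (\<lambda>k. [16] @ rep k [1,-2,-1,8] @ [1,-2,-2,1,2,-2,-1] @ rep k [8,1,-2,-1])"
  by (rule special_family_cert[where c = "[]" and d = "[0, -1, 0]" and m = 2
        and X = "[1,1,1,1,1,1,1,16,17,2]" and Y = "[16,17,2,1,1,1,1,1,1,1]"
        and C = "[16,17,1,2,17,16,17,2]" and A = "[1,1,1,1,1,1,1,1,1,1,1,1,1,1,1]"])
    (simp_all add: zmat_defs)

theorem theorem2p5:
  assumes "w \<in> set families18"
  shows "(\<forall>k. special_hyperbolic (Mseq (w k)))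
    \<and> (\<forall>k p. mobius (Mseq (w k)) p = p \<longrightarrow> (\<exists>r. p = Some r \<and> r \<in> lamK))
    \<and> infinite {orbit18 p | p k. mobius (Mseq (w k)) p = p}"
proof -
  have "special_family w"
    using assms special_family_1 special_family_2 special_family_3 special_family_4 special_family_5
      special_family_6 special_family_7 special_family_8 special_family_9 special_family_10
      special_family_11 special_family_12 special_family_13
    unfolding families18_def by auto
  then show ?thesis
    unfolding special_family_def .
qed

end
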